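(* Let $A\in\mathbb{R}^{n\times n}$, $B_i\in\mathbb{R}^{n\times p_i}$, $C_i\in\mathbb{R}^{q_i\times n}$, $i\in\{1,\dots,m\}$, define a jointly controllable and jointly observable $m$-channel linear system with strongly connected neighbor graph $\mathbb{N}$ on $\{1,\dots,m\}$, and let $F_i\in\mathbb{R}^{p_i\times n}$ be arbitrary. Let $b_i$ be the $i$th unit vector of $\mathbb{R}^m$, $\tilde A = I_m\otimes(A+\sum_{j=1}^mB_jF_j)-Q$ where $Q$ is the $nm\times nm$ block matrix with $(i,j)$th block $B_jF_j$, $\tilde B_i=b_i\otimes I_n$, $\hat C_i=C_i\tilde B_i'$, and $\tilde C_i=\mathrm{column}\{C_{ij^i_1},\dots,C_{ij^i_{m_i}}\}$ with $\{j^i_1,\dots,j^i_{m_i}\}=\mathcal{N}_i$ and $C_{ij}=(b_i'-b_j')\otimes I_n$. Then for any given matrices $K_i\in\mathbb{R}^{n\times q_i}$, $i\in\{1,\dots,m\}$, there exist matrices $H_i\in\mathbb{R}^{n\times nm_i}$ such that for every $q\in\{1,\dots,m\}$ the pair $\big(\tilde A+\sum_{i=1}^m\tilde B_i(K_i\hat C_i+H_i\tilde C_i),\ \tilde B_q\big)$ is controllable with controllability index $m$.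
   Context: Jointly controllable: $(A,[B_1\ \cdots\ B_m])$ controllable; jointly observable: $(\mathrm{column}\{C_1,\dots,C_m\},A)$ observable. The neighbor graph has an arc $j\to i$ iff $j$ is a neighbor of $i$; $\mathcal{N}_i$ is the set of neighbors of $i$ including $i$. The controllability index of a controllable pair $(F,G)$ with $N$-dimensional state is the smallest $k$ with $\mathrm{rank}[G\ FG\ \cdots\ F^{k-1}G]=N$. *)

theory Defs
  imports "Jordan_Normal_Form.DL_Rank"
begin

text \<open>All matrices are real matrices of type real mat (Jordan_Normal_Form); channels/agents
  are indexed by 0..m-1 instead of 1..m.\<close>

definition append_cols :: "'a :: zero mat \<Rightarrow> 'a mat \<Rightarrow> 'a mat" where
  "append_cols A B = four_block_mat A B (0\<^sub>m 0 (dim_col A)) (0\<^sub>m 0 (dim_col B))"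

definition hcat :: "nat \<Rightarrow> 'a :: zero mat list \<Rightarrow> 'a mat" where
  "hcat nr Ms = foldr append_cols Ms (0\<^sub>m nr 0)"

definition vcat :: "nat \<Rightarrow> 'a :: zero mat list \<Rightarrow> 'a mat" where
  "vcat nc Ms = foldr append_rows Ms (0\<^sub>m 0 nc)"

definition kron :: "'a :: times mat \<Rightarrow> 'a mat \<Rightarrow> 'a mat" where
  "kron A B = mat (dim_row A * dim_row B) (dim_col A * dim_col B)
     (\<lambda>(i,j). A $$ (i div dim_row B, j div dim_col B) * B $$ (i mod dim_row B, j mod dim_col B))"

definition msum :: "nat \<Rightarrow> nat \<Rightarrow> ('b \<Rightarrow> 'a :: comm_monoid_add mat) \<Rightarrow> 'b set \<Rightarrow> 'a mat" where
  "msum nr nc f I = mat nr nc (\<lambda>ij. \<Sum>k\<in>I. f k $$ ij)"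

definition mrank :: "real mat \<Rightarrow> nat" where
  "mrank M = vec_space.rank (dim_row M) M"

definition ctrb_mat :: "real mat \<Rightarrow> real mat \<Rightarrow> nat \<Rightarrow> real mat" where
  "ctrb_mat F G k = hcat (dim_row F) (map (\<lambda>l. (F ^\<^sub>m l) * G) [0..<k])"

definition controllable :: "real mat \<Rightarrow> real mat \<Rightarrow> bool" where
  "controllable F G \<longleftrightarrow> mrank (ctrb_mat F G (dim_row F)) = dim_row F"

definition controllability_index :: "real mat \<Rightarrow> real mat \<Rightarrow> nat" where
  "controllability_index F G = (LEAST k. mrank (ctrb_mat F G k) = dim_row F)"

definition obsv_mat :: "real mat \<Rightarrow> real mat \<Rightarrow> real mat" where
  "obsv_mat C A = vcat (dim_col A) (map (\<lambda>l. C * (A ^\<^sub>m l)) [0..<dim_row A])"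

definition observable :: "real mat \<Rightarrow> real mat \<Rightarrow> bool" where
  "observable C A \<longleftrightarrow> mrank (obsv_mat C A) = dim_row A"

text \<open>Neighbor graph on {0..<m}: nbr i j means j is a neighbor of i, i.e. arc j -> i.\<close>
definition neighbor_arcs :: "nat \<Rightarrow> (nat \<Rightarrow> nat \<Rightarrow> bool) \<Rightarrow> (nat \<times> nat) set" where
  "neighbor_arcs m nbr = {(j, i). i < m \<and> j < m \<and> nbr i j}"

definition strongly_connected :: "nat \<Rightarrow> (nat \<Rightarrow> nat \<Rightarrow> bool) \<Rightarrow> bool" where
  "strongly_connected m nbr \<longleftrightarrow> (\<forall>i<m. \<forall>j<m. (i, j) \<in> (neighbor_arcs m nbr)\<^sup>*)"

definition nbhd :: "nat \<Rightarrow> (nat \<Rightarrow> nat \<Rightarrow> bool) \<Rightarrow> nat \<Rightarrow> nat set" where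
  "nbhd m nbr i = {j. j < m \<and> (j = i \<or> nbr i j)}"

definition unitv :: "nat \<Rightarrow> nat \<Rightarrow> real mat" where
  "unitv m i = mat m 1 (\<lambda>(r, c). if r = i then 1 else 0)"

end

theory Submission
  imports Defs "HOL-Computational_Algebra.Polynomial" "Jordan_Normal_Form.DL_Rank_Submatrix"
begin

text \<open>
  Choose H_i = t [W_ij I_n]_{j in N_i}. The closed-loop matrix is then Y + t (L_W (x) I_n), where Y
  does not depend on the H_i and L_W is the Laplacian of the neighbor graph with weights W; and the
  Krylov matrix of (L (x) I_n, b_q (x) I_n) is the Krylov matrix of (L, b_q) tensored with I_n.
  Strong connectivity gives, for every q, a spanning in-tree rooted at q; weighting its edges so
  that the diagonal entries of L are distinct makes b_q a cyclic vector of L, because the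
  annihilator of b_q is the whole characteristic polynomial. Interpolate these m tree weightings
  by a polynomial curve W(s) through the nodes s = 0, ..., m - 1 and let u(s) = prod_x (s - x).
  Every Krylov determinant of u(s) Y + L_W(s) (x) I_n is a polynomial in s that is nonzero at a
  node, so all of them are nonzero at some s off the nodes, and t = 1/u(s) works for every q.
  A nonsingular square Krylov matrix with m blocks of width n means controllability index m.
\<close>

section \<open>Block matrices\<close>

lemma block_index_less:
  fixes k a m n :: nat
  assumes "k < m" "a < n"
  shows "k * n + a < m * n"
proof -
  have "k * n + a < Suc k * n" using assms(2) by simp
  also have "\<dots> \<le> m * n" using assms(1) by (intro mult_le_mono1) simp
  finally show ?thesis .
qed

lemma sum_split_blocks:
  fixes g :: "nat \<Rightarrow> 'a::comm_monoid_add"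
  shows "(\<Sum>j<m * n. g j) = (\<Sum>k<m. \<Sum>a<n. g (k * n + a))"
proof -
  have "(\<Sum>j<m * n. g j) = (\<Sum>k<m. sum g {k * n..<k * n + n})" by (rule sum.nat_group[symmetric])
  also have "\<dots> = (\<Sum>k<m. \<Sum>a<n. g (k * n + a))"
  proof (rule sum.cong[OF refl])
    fix k
    show "sum g {k * n..<k * n + n} = (\<Sum>a<n. g (k * n + a))"
      using sum.shift_bounds_nat_ivl[of g 0 "k * n" n] by (simp add: lessThan_atLeast0 add.commute)
  qed
  finally show ?thesis .
qed

lemma dim_append_cols[simp]:
  "dim_row (append_cols A B) = dim_row A" "dim_col (append_cols A B) = dim_col A + dim_col B"
  unfolding append_cols_def by simp_all

lemma index_append_cols:
  assumes "i < dim_row A" "j < dim_col A + dim_col B"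
  shows "append_cols A B $$ (i, j) = (if j < dim_col A then A $$ (i, j) else B $$ (i, j - dim_col A))"
  using assms unfolding append_cols_def by simp

lemma hcat_carrier:
  assumes "\<forall>M\<in>set Ms. M \<in> carrier_mat nr w"
  shows "hcat nr Ms \<in> carrier_mat nr (length Ms * w)"
  using assms
proof (induction Ms)
  case (Cons M Ms)
  then have "hcat nr Ms \<in> carrier_mat nr (length Ms * w)" "M \<in> carrier_mat nr w" by auto
  moreover have "hcat nr (M # Ms) = append_cols M (hcat nr Ms)" by (simp add: hcat_def)
  ultimately show ?case unfolding carrier_mat_def by simp
qed (simp add: hcat_def)

lemma index_hcat:
  assumes "\<forall>M\<in>set Ms. M \<in> carrier_mat nr w" "i < nr" "j < length Ms * w"
  shows "hcat nr Ms $$ (i, j) = (Ms ! (j div w)) $$ (i, j mod w)"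
  using assms
proof (induction Ms arbitrary: j)
  case (Cons M Ms)
  have c: "hcat nr Ms \<in> carrier_mat nr (length Ms * w)" "M \<in> carrier_mat nr w"
    using Cons.prems hcat_carrier[of Ms nr w] by auto
  have h: "hcat nr (M # Ms) = append_cols M (hcat nr Ms)" by (simp add: hcat_def)
  show ?case
  proof (cases "j < w")
    case True
    then show ?thesis using c Cons.prems by (subst h, subst index_append_cols) auto
  next
    case False
    have "0 < w" using Cons.prems(3) by (cases w) auto
    then have "j div w = Suc ((j - w) div w)" "j mod w = (j - w) mod w"
      using False by (simp_all add: le_div_geq le_mod_geq)
    then show ?thesis using c Cons.prems Cons.IH[of "j - w"] False
      by (subst h, subst index_append_cols) auto
  qed
qed simp

lemma vcat_carrier:
  assumes "\<forall>M\<in>set Ms. M \<in> carrier_mat h nc"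
  shows "vcat nc Ms \<in> carrier_mat (length Ms * h) nc"
  using assms
proof (induction Ms)
  case (Cons M Ms)
  then have "vcat nc Ms \<in> carrier_mat (length Ms * h) nc" "M \<in> carrier_mat h nc" by auto
  moreover have "vcat nc (M # Ms) = append_rows M (vcat nc Ms)" by (simp add: vcat_def)
  ultimately show ?case by simp
qed (simp add: vcat_def)

lemma index_vcat:
  assumes "\<forall>M\<in>set Ms. M \<in> carrier_mat h nc" "i < length Ms * h" "j < nc"
  shows "vcat nc Ms $$ (i, j) = (Ms ! (i div h)) $$ (i mod h, j)"
  using assms
proof (induction Ms arbitrary: i)
  case (Cons M Ms)
  have c: "vcat nc Ms \<in> carrier_mat (length Ms * h) nc" "M \<in> carrier_mat h nc"
    using Cons.prems vcat_carrier[of Ms h nc] by auto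
  have v: "vcat nc (M # Ms) = append_rows M (vcat nc Ms)" by (simp add: vcat_def)
  show ?case
  proof (cases "i < h")
    case True
    then show ?thesis using c Cons.prems
      by (subst v, unfold append_rows_def, subst index_mat_four_block) auto
  next
    case False
    have "0 < h" using Cons.prems(2) by (cases h) auto
    then have "i div h = Suc ((i - h) div h)" "i mod h = (i - h) mod h"
      using False by (simp_all add: le_div_geq le_mod_geq)
    then show ?thesis using c Cons.prems Cons.IH[of "i - h"] False
      by (subst v, unfold append_rows_def, subst index_mat_four_block) auto
  qed
qed simp

lemma index_hcat_mult_vcat:
  assumes Ms: "\<forall>M\<in>set Ms. M \<in> carrier_mat nr w" and Ns: "\<forall>N\<in>set Ns. N \<in> carrier_mat w nc"
    and len: "length Ns = length Ms" and i: "i < nr" and j: "j < nc"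
  shows "(hcat nr Ms * vcat nc Ns) $$ (i, j) = (\<Sum>k<length Ms. (Ms ! k * Ns ! k) $$ (i, j))"
proof -
  have "(hcat nr Ms * vcat nc Ns) $$ (i, j)
      = (\<Sum>c<length Ms * w. hcat nr Ms $$ (i, c) * vcat nc Ns $$ (c, j))"
    using hcat_carrier[OF Ms] vcat_carrier[OF Ns] len i j
    by (simp add: scalar_prod_def atLeast0LessThan)
  also have "\<dots> = (\<Sum>k<length Ms. \<Sum>a<w. hcat nr Ms $$ (i, k * w + a) * vcat nc Ns $$ (k * w + a, j))"
    by (rule sum_split_blocks)
  also have "\<dots> = (\<Sum>k<length Ms. \<Sum>a<w. (Ms ! k) $$ (i, a) * (Ns ! k) $$ (a, j))"
    using block_index_less len i j
    by (intro sum.cong refl) (simp add: index_hcat[OF Ms] index_vcat[OF Ns])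
  also have "\<dots> = (\<Sum>k<length Ms. (Ms ! k * Ns ! k) $$ (i, j))"
  proof (intro sum.cong refl)
    fix k assume "k \<in> {..<length Ms}"
    then have "Ms ! k \<in> carrier_mat nr w" "Ns ! k \<in> carrier_mat w nc" using Ms Ns len by auto
    then show "(\<Sum>a<w. (Ms ! k) $$ (i, a) * (Ns ! k) $$ (a, j)) = (Ms ! k * Ns ! k) $$ (i, j)"
      using i j by (simp add: scalar_prod_def atLeast0LessThan)
  qed
  finally show ?thesis .
qed

section \<open>Kronecker products with the identity\<close>

lemma kron_one_carrier: "A \<in> carrier_mat a b \<Longrightarrow> kron A (1\<^sub>m n) \<in> carrier_mat (a * n) (b * n)"
  unfolding kron_def carrier_mat_def by auto

lemma index_kron_one:
  fixes A :: "'a::semiring_1 mat"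
  assumes i: "i < dim_row A * n" and j: "j < dim_col A * n"
  shows "kron A (1\<^sub>m n) $$ (i, j) = (if i mod n = j mod n then A $$ (i div n, j div n) else 0)"
proof -
  have "n > 0" using i by (cases n) auto
  then have "i mod n < n" "j mod n < n" by simp_all
  moreover have "kron A (1\<^sub>m n) $$ (i, j) = A $$ (i div n, j div n) * 1\<^sub>m n $$ (i mod n, j mod n)"
    unfolding kron_def using i j by (simp only: index_mat index_one_mat dim_row_mat dim_col_mat split)
  ultimately show ?thesis by simp
qed

lemma index_kron_one_col_block:
  fixes A :: "'a::semiring_1 mat"
  assumes "A \<in> carrier_mat a b" "i < a * n" "k < b" "e < n"
  shows "kron A (1\<^sub>m n) $$ (i, k * n + e) = (if i mod n = e then A $$ (i div n, k) else 0)"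
proof -
  have "k * n + e < b * n" "(k * n + e) div n = k" "(k * n + e) mod n = e"
    using block_index_less[of k b e n] assms by auto
  then show ?thesis using assms by (subst index_kron_one) auto
qed

lemma index_kron_one_row_block:
  fixes C :: "'a::semiring_1 mat"
  assumes "C \<in> carrier_mat b c" "k < b" "e < n" "j < c * n"
  shows "kron C (1\<^sub>m n) $$ (k * n + e, j) = (if e = j mod n then C $$ (k, j div n) else 0)"
proof -
  have "k * n + e < b * n" "(k * n + e) div n = k" "(k * n + e) mod n = e"
    using block_index_less[of k b e n] assms by auto
  then show ?thesis using assms by (subst index_kron_one) auto
qed

lemma kron_one_mult:
  fixes A C :: "'a::comm_semiring_1 mat"
  assumes A: "A \<in> carrier_mat a b" and C: "C \<in> carrier_mat b c"
  shows "kron A (1\<^sub>m n) * kron C (1\<^sub>m n) = kron (A * C) (1\<^sub>m n)"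
proof -
  have KA: "kron A (1\<^sub>m n) \<in> carrier_mat (a * n) (b * n)" and KC: "kron C (1\<^sub>m n) \<in> carrier_mat (b * n) (c * n)"
    and KAC: "kron (A * C) (1\<^sub>m n) \<in> carrier_mat (a * n) (c * n)"
    using kron_one_carrier A C mult_carrier_mat[OF A C] by blast+
  show ?thesis
  proof (rule eq_matI)
    fix i j assume "i < dim_row (kron (A * C) (1\<^sub>m n))" "j < dim_col (kron (A * C) (1\<^sub>m n))"
    then have i: "i < a * n" and j: "j < c * n" using KAC by auto
    then have n: "n > 0" by (cases n) auto
    have "(kron A (1\<^sub>m n) * kron C (1\<^sub>m n)) $$ (i, j)
        = (\<Sum>l<b * n. kron A (1\<^sub>m n) $$ (i, l) * kron C (1\<^sub>m n) $$ (l, j))"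
      using KA KC i j by (simp add: scalar_prod_def atLeast0LessThan)
    also have "\<dots> = (\<Sum>k<b. \<Sum>e<n. kron A (1\<^sub>m n) $$ (i, k * n + e) * kron C (1\<^sub>m n) $$ (k * n + e, j))"
      by (rule sum_split_blocks)
    also have "\<dots> = (\<Sum>k<b. if i mod n = j mod n then A $$ (i div n, k) * C $$ (k, j div n) else 0)"
    proof (intro sum.cong refl)
      fix k assume k: "k \<in> {..<b}"
      have "kron A (1\<^sub>m n) $$ (i, k * n + e) * kron C (1\<^sub>m n) $$ (k * n + e, j)
          = (if e = i mod n then (if i mod n = j mod n then A $$ (i div n, k) * C $$ (k, j div n) else 0) else 0)"
        if "e < n" for e
        using index_kron_one_col_block[OF A i _ that] index_kron_one_row_block[OF C _ that j] k by auto
      then have "(\<Sum>e<n. kron A (1\<^sub>m n) $$ (i, k * n + e) * kron C (1\<^sub>m n) $$ (k * n + e, j))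
          = (\<Sum>e<n. if e = i mod n then (if i mod n = j mod n then A $$ (i div n, k) * C $$ (k, j div n) else 0) else 0)"
        by (intro sum.cong) auto
      also have "\<dots> = (if i mod n = j mod n then A $$ (i div n, k) * C $$ (k, j div n) else 0)"
        using n by (subst sum.delta) auto
      finally show "(\<Sum>e<n. kron A (1\<^sub>m n) $$ (i, k * n + e) * kron C (1\<^sub>m n) $$ (k * n + e, j))
          = (if i mod n = j mod n then A $$ (i div n, k) * C $$ (k, j div n) else 0)" .
    qed
    also have "\<dots> = (if i mod n = j mod n then (A * C) $$ (i div n, j div n) else 0)"
    proof -
      have "i div n < a" "j div n < c" using i j by (simp_all add: less_mult_imp_div_less)
      then show ?thesis using A C by (cases "i mod n = j mod n") (simp_all add: scalar_prod_def atLeast0LessThan)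
    qed
    also have "\<dots> = kron (A * C) (1\<^sub>m n) $$ (i, j)"
      using A C i j by (intro index_kron_one[symmetric]) auto
    finally show "(kron A (1\<^sub>m n) * kron C (1\<^sub>m n)) $$ (i, j) = kron (A * C) (1\<^sub>m n) $$ (i, j)" .
  qed (use KA KC KAC in auto)
qed

lemma kron_one_one: "kron (1\<^sub>m m) (1\<^sub>m n) = (1\<^sub>m (m * n) :: 'a::semiring_1 mat)"
proof (rule eq_matI)
  fix i j assume "i < dim_row (1\<^sub>m (m * n) :: 'a mat)" "j < dim_col (1\<^sub>m (m * n) :: 'a mat)"
  then have i: "i < m * n" and j: "j < m * n" by auto
  have "(i div n = j div n \<and> i mod n = j mod n) = (i = j)" by (metis div_mult_mod_eq)
  then show "kron (1\<^sub>m m) (1\<^sub>m n) $$ (i, j) = (1\<^sub>m (m * n) :: 'a mat) $$ (i, j)"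
    using i j by (subst index_kron_one) (auto simp: less_mult_imp_div_less)
qed (use kron_one_carrier[OF one_carrier_mat, of m n] in auto)

lemma kron_one_smult:
  fixes A :: "'a::semiring_1 mat"
  shows "kron (c \<cdot>\<^sub>m A) (1\<^sub>m n) = c \<cdot>\<^sub>m kron A (1\<^sub>m n)"
proof (rule eq_matI)
  fix i j assume "i < dim_row (c \<cdot>\<^sub>m kron A (1\<^sub>m n))" "j < dim_col (c \<cdot>\<^sub>m kron A (1\<^sub>m n))"
  then have ij: "i < dim_row A * n" "j < dim_col A * n" by (simp_all add: kron_def)
  then have "i div n < dim_row A" "j div n < dim_col A" by (simp_all add: less_mult_imp_div_less)
  then show "kron (c \<cdot>\<^sub>m A) (1\<^sub>m n) $$ (i, j) = (c \<cdot>\<^sub>m kron A (1\<^sub>m n)) $$ (i, j)"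
    using ij kron_one_carrier[of A "dim_row A" "dim_col A" n] by (simp add: index_kron_one)
qed (simp_all add: kron_def)

lemma kron_one_pow:
  fixes A :: "'a::comm_semiring_1 mat"
  assumes A: "A \<in> carrier_mat m m"
  shows "kron A (1\<^sub>m n) ^\<^sub>m k = kron (A ^\<^sub>m k) (1\<^sub>m n)"
proof (induction k)
  case 0
  have "dim_row (kron A (1\<^sub>m n)) = m * n" using kron_one_carrier[OF A] by auto
  then show ?case using A by (simp add: kron_one_one)
next
  case (Suc k)
  then show ?case using A by (simp add: kron_one_mult[OF pow_carrier_mat[OF A] A])
qed

lemma det_kron_one_nonzero:
  fixes A :: "'a::field mat"
  assumes A: "A \<in> carrier_mat m m" and det: "det A \<noteq> 0"
  shows "det (kron A (1\<^sub>m n)) \<noteq> 0"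
proof -
  note adj = adj_mat[OF A]
  have "kron A (1\<^sub>m n) * kron (adj_mat A) (1\<^sub>m n) = det A \<cdot>\<^sub>m 1\<^sub>m (m * n)"
    by (simp add: kron_one_mult[OF A adj(1)] adj(2) kron_one_smult kron_one_one)
  then have "det (kron A (1\<^sub>m n)) * det (kron (adj_mat A) (1\<^sub>m n)) = det A ^ (m * n)"
    using det_mult[OF kron_one_carrier[OF A, of n] kron_one_carrier[OF adj(1), of n]] by simp
  then show ?thesis using det by auto
qed

section \<open>Krylov matrices\<close>

lemma ctrb_mat_carrier:
  assumes "F \<in> carrier_mat N N" "G \<in> carrier_mat N n"
  shows "ctrb_mat F G k \<in> carrier_mat N (k * n)"
proof -
  have "\<forall>M\<in>set (map (\<lambda>l. F ^\<^sub>m l * G) [0..<k]). M \<in> carrier_mat N n" using assms by auto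
  from hcat_carrier[OF this] show ?thesis unfolding ctrb_mat_def using assms by simp
qed

lemma index_ctrb_mat:
  assumes "F \<in> carrier_mat N N" "G \<in> carrier_mat N n" "i < N" "j < k * n"
  shows "ctrb_mat F G k $$ (i, j) = (F ^\<^sub>m (j div n) * G) $$ (i, j mod n)"
proof -
  have c: "\<forall>M\<in>set (map (\<lambda>l. F ^\<^sub>m l * G) [0..<k]). M \<in> carrier_mat N n" using assms by auto
  have "j div n < k" using assms by (simp add: less_mult_imp_div_less)
  then show ?thesis unfolding ctrb_mat_def using index_hcat[OF c, of i j] assms by simp
qed

lemma ctrb_mat_kron_one:
  assumes L: "L \<in> carrier_mat m m" and g: "g \<in> carrier_mat m 1"
  shows "ctrb_mat (kron L (1\<^sub>m n)) (kron g (1\<^sub>m n)) k = kron (ctrb_mat L g k) (1\<^sub>m n)"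
proof -
  have KL: "kron L (1\<^sub>m n) \<in> carrier_mat (m * n) (m * n)" and Kg: "kron g (1\<^sub>m n) \<in> carrier_mat (m * n) n"
    using kron_one_carrier[OF L, of n] kron_one_carrier[OF g, of n] by auto
  have C: "ctrb_mat L g k \<in> carrier_mat m k" using ctrb_mat_carrier[OF L g, of k] by simp
  show ?thesis
  proof (rule eq_matI)
    fix i j assume "i < dim_row (kron (ctrb_mat L g k) (1\<^sub>m n))" "j < dim_col (kron (ctrb_mat L g k) (1\<^sub>m n))"
    then have i: "i < m * n" and j: "j < k * n" using kron_one_carrier[OF C, of n] by auto
    then have n: "n > 0" by (cases n) auto
    have Lg: "L ^\<^sub>m (j div n) * g \<in> carrier_mat m 1" using mult_carrier_mat[OF pow_carrier_mat[OF L] g] .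
    have "ctrb_mat (kron L (1\<^sub>m n)) (kron g (1\<^sub>m n)) k $$ (i, j)
        = (kron L (1\<^sub>m n) ^\<^sub>m (j div n) * kron g (1\<^sub>m n)) $$ (i, j mod n)"
      by (rule index_ctrb_mat[OF KL Kg i j])
    also have "\<dots> = kron (L ^\<^sub>m (j div n) * g) (1\<^sub>m n) $$ (i, j mod n)"
      by (simp add: kron_one_pow[OF L] kron_one_mult[OF pow_carrier_mat[OF L] g])
    also have "\<dots> = (if i mod n = j mod n then (L ^\<^sub>m (j div n) * g) $$ (i div n, 0) else 0)"
      using Lg i n by (subst index_kron_one) auto
    also have "\<dots> = kron (ctrb_mat L g k) (1\<^sub>m n) $$ (i, j)"
      using C i j index_ctrb_mat[OF L g, of "i div n" "j div n" k]
      by (subst index_kron_one) (auto simp: less_mult_imp_div_less)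
    finally show "ctrb_mat (kron L (1\<^sub>m n)) (kron g (1\<^sub>m n)) k $$ (i, j) = kron (ctrb_mat L g k) (1\<^sub>m n) $$ (i, j)" .
  qed (use ctrb_mat_carrier[OF KL Kg, of k] kron_one_carrier[OF C, of n] in auto)
qed

lemma smult_pow_mat:
  fixes Z :: "'a::comm_ring_1 mat"
  assumes Z: "Z \<in> carrier_mat N N"
  shows "(t \<cdot>\<^sub>m Z) ^\<^sub>m k = t ^ k \<cdot>\<^sub>m Z ^\<^sub>m k"
proof (induction k)
  case 0 then show ?case using Z by (auto intro!: eq_matI)
next
  case (Suc k)
  have "(t \<cdot>\<^sub>m Z) ^\<^sub>m Suc k = t ^ k \<cdot>\<^sub>m (Z ^\<^sub>m k * (t \<cdot>\<^sub>m Z))"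
    using Suc mult_smult_assoc_mat[OF pow_carrier_mat[OF Z] smult_carrier_mat[OF Z]] by simp
  also have "Z ^\<^sub>m k * (t \<cdot>\<^sub>m Z) = t \<cdot>\<^sub>m (Z ^\<^sub>m k * Z)"
    by (rule mult_smult_distrib[OF pow_carrier_mat[OF Z] Z])
  also have "t ^ k \<cdot>\<^sub>m (t \<cdot>\<^sub>m (Z ^\<^sub>m k * Z)) = t ^ Suc k \<cdot>\<^sub>m (Z ^\<^sub>m k * Z)"
    by (rule eq_matI) auto
  finally show ?case by simp
qed

lemma ctrb_mat_smult:
  fixes Z :: "real mat"
  assumes Z: "Z \<in> carrier_mat N N" and G: "G \<in> carrier_mat N n"
  shows "ctrb_mat (t \<cdot>\<^sub>m Z) G k
    = ctrb_mat Z G k * mat (k * n) (k * n) (\<lambda>(i, j). if i = j then t ^ (j div n) else 0)"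
  (is "_ = _ * ?D")
proof (rule eq_matI)
  have tZ: "t \<cdot>\<^sub>m Z \<in> carrier_mat N N" using Z by simp
  have C: "ctrb_mat Z G k \<in> carrier_mat N (k * n)" by (rule ctrb_mat_carrier[OF Z G])
  fix i j assume "i < dim_row (ctrb_mat Z G k * ?D)" "j < dim_col (ctrb_mat Z G k * ?D)"
  then have i: "i < N" and j: "j < k * n" using C by auto
  have "(ctrb_mat Z G k * ?D) $$ (i, j) = (\<Sum>l<k * n. ctrb_mat Z G k $$ (i, l) * ?D $$ (l, j))"
    using C i j by (simp add: scalar_prod_def atLeast0LessThan)
  also have "\<dots> = (\<Sum>l<k * n. if l = j then ctrb_mat Z G k $$ (i, j) * t ^ (j div n) else 0)"
    using j by (intro sum.cong) auto
  also have "\<dots> = t ^ (j div n) * (Z ^\<^sub>m (j div n) * G) $$ (i, j mod n)"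
    using j by (simp add: index_ctrb_mat[OF Z G i j])
  also have "\<dots> = (t ^ (j div n) \<cdot>\<^sub>m (Z ^\<^sub>m (j div n) * G)) $$ (i, j mod n)"
    using Z G i j by (cases n) auto
  also have "\<dots> = ctrb_mat (t \<cdot>\<^sub>m Z) G k $$ (i, j)"
    using Z G by (simp add: index_ctrb_mat[OF tZ G i j] smult_pow_mat mult_smult_assoc_mat[of _ N N])
  finally show "ctrb_mat (t \<cdot>\<^sub>m Z) G k $$ (i, j) = (ctrb_mat Z G k * ?D) $$ (i, j)" by simp
qed (use ctrb_mat_carrier[OF _ G, of "t \<cdot>\<^sub>m Z" k] Z ctrb_mat_carrier[OF Z G, of k] in auto)

lemma det_ctrb_mat_smult_nonzero:
  fixes Z :: "real mat"
  assumes Z: "Z \<in> carrier_mat N N" and G: "G \<in> carrier_mat N n" and N: "N = k * n"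
    and t: "t \<noteq> 0" and det: "det (ctrb_mat Z G k) \<noteq> 0"
  shows "det (ctrb_mat (t \<cdot>\<^sub>m Z) G k) \<noteq> 0"
proof -
  define D where "D = mat (k * n) (k * n) (\<lambda>(i, j). if i = j then t ^ (j div n) else 0)"
  have D: "D \<in> carrier_mat N N" unfolding D_def N by simp
  have "det D = (\<Prod>i<k * n. t ^ (i div n))"
    using det_upper_triangular[OF _ D]
    by (simp add: D_def N upper_triangular_def prod_list_diag_prod atLeast0LessThan)
  then have "det D \<noteq> 0" using t by simp
  moreover have "ctrb_mat Z G k \<in> carrier_mat N N" using ctrb_mat_carrier[OF Z G] N by simp
  then have "det (ctrb_mat (t \<cdot>\<^sub>m Z) G k) = det (ctrb_mat Z G k) * det D"
    unfolding ctrb_mat_smult[OF Z G] D_def[symmetric] using D by (rule det_mult)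
  ultimately show ?thesis using det by simp
qed

lemma (in vec_space) rank_le_nr:
  assumes "A \<in> carrier_mat n nc"
  shows "rank A \<le> n"
proof -
  have "VectorSpace.subspace class_ring (span (set (cols A))) V"
    using span_is_subspace assms cols_dim carrier_matD by (metis carrier_vecD carrier_vecI subsetI)
  then have "vectorspace.dim class_ring (vs (span (set (cols A)))) \<le> dim"
    using subspace_dim fin_dim fin_dim_span_cols[OF assms] by blast
  then show ?thesis unfolding rank_def dim_is_n by simp
qed

lemma pick_lessThan: "j < N \<Longrightarrow> pick {..<N} j = j"
proof -
  assume j: "j < N"
  have "{a \<in> {..<N}. a < j} = {..<j}" using j by auto
  then show ?thesis using pick_card_in_set[of j "{..<N}"] j by simp
qed

lemma submatrix_ctrb_mat:
  assumes F: "F \<in> carrier_mat N N" and G: "G \<in> carrier_mat N n" and k: "k \<le> k'"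
  shows "submatrix (ctrb_mat F G k') UNIV {..<k * n} = ctrb_mat F G k"
proof -
  have C': "ctrb_mat F G k' \<in> carrier_mat N (k' * n)" and C: "ctrb_mat F G k \<in> carrier_mat N (k * n)"
    using ctrb_mat_carrier[OF F G] by auto
  have le: "k * n \<le> k' * n" using k by simp
  have rows: "card {i. i < dim_row (ctrb_mat F G k') \<and> i \<in> UNIV} = N" using C' by simp
  have "{j. j < dim_col (ctrb_mat F G k') \<and> j \<in> {..<k * n}} = {..<k * n}" using C' le by (auto intro: less_le_trans)
  then have cols: "card {j. j < dim_col (ctrb_mat F G k') \<and> j \<in> {..<k * n}} = k * n" by simp
  show ?thesis
  proof (rule eq_matI)
    fix i j assume "i < dim_row (ctrb_mat F G k)" "j < dim_col (ctrb_mat F G k)"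
    then have i: "i < N" and j: "j < k * n" using C by auto
    have "submatrix (ctrb_mat F G k') UNIV {..<k * n} $$ (i, j) = ctrb_mat F G k' $$ (i, j)"
      using submatrix_index[of i "ctrb_mat F G k'" UNIV j "{..<k * n}"] rows cols i j
      by (simp add: pick_UNIV pick_lessThan)
    also have "\<dots> = ctrb_mat F G k $$ (i, j)"
      using index_ctrb_mat[OF F G i, of j k'] index_ctrb_mat[OF F G i j] j le by simp
    finally show "submatrix (ctrb_mat F G k') UNIV {..<k * n} $$ (i, j) = ctrb_mat F G k $$ (i, j)" .
  qed (use rows cols C in \<open>simp_all add: dim_submatrix\<close>)
qed

lemma controllable_if_det_ctrb_mat:
  assumes F: "F \<in> carrier_mat N N" and G: "G \<in> carrier_mat N n" and N: "N = m * n" and n: "n > 0"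
    and det: "det (ctrb_mat F G m) \<noteq> 0"
  shows "controllable F G \<and> controllability_index F G = m"
proof -
  have C: "ctrb_mat F G k \<in> carrier_mat N (k * n)" for k by (rule ctrb_mat_carrier[OF F G])
  have full: "mrank (ctrb_mat F G m) = N"
    unfolding mrank_def using vec_space.det_rank_iff[of _ N] C[of m] det N by auto
  have "controllability_index F G = m"
    unfolding controllability_index_def
  proof (rule Least_equality)
    show "mrank (ctrb_mat F G m) = dim_row F" using full F by simp
    fix k assume k: "mrank (ctrb_mat F G k) = dim_row F"
    have "mrank (ctrb_mat F G k) \<le> k * n"
      unfolding mrank_def using vec_space.rank_le_nc[OF C[of k]] C[of k] by simp
    then show "m \<le> k" using k F N n by (metis carrier_matD(1) mult_le_cancel2)
  qed
  moreover have "mrank (ctrb_mat F G N) = N"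
  proof -
    have "m \<le> N" using N n by simp
    then have "det (submatrix (ctrb_mat F G N) UNIV {..<m * n}) \<noteq> 0"
      using submatrix_ctrb_mat[OF F G] det by simp
    from vec_space.rank_gt_minor[OF C[of N] this]
    have "card {j. j < N * n \<and> j \<in> {..<m * n}} \<le> vec_space.rank N (ctrb_mat F G N)" .
    moreover have "{j. j < N * n \<and> j \<in> {..<m * n}} = {..<N}"
      using n unfolding N[symmetric] by (auto intro: less_le_trans[of _ N "N * n"])
    ultimately have "N \<le> vec_space.rank N (ctrb_mat F G N)" by simp
    then show ?thesis unfolding mrank_def using vec_space.rank_le_nr[OF C[of N]] C[of N] by simp
  qed
  then have "controllable F G" unfolding controllable_def using F by simp
  ultimately show ?thesis by simp
qed

section \<open>Cyclic vectors of weighted rooted trees\<close>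

locale rooted_tree =
  fixes V :: "nat set" and root :: nat and par depth :: "nat \<Rightarrow> nat" and d l :: "nat \<Rightarrow> real"
  assumes finite_nodes: "finite V" and root_node: "root \<in> V"
    and par_node: "\<And>k. k \<in> V \<Longrightarrow> k \<noteq> root \<Longrightarrow> par k \<in> V"
    and depth_par_less: "\<And>k. k \<in> V \<Longrightarrow> k \<noteq> root \<Longrightarrow> depth (par k) < depth k"
    and edge_weight_nonzero: "\<And>k. k \<in> V \<Longrightarrow> k \<noteq> root \<Longrightarrow> l k \<noteq> 0"
    and inj_diag: "inj_on d V"
begin

text \<open>tree_op S is the matrix of the subtree S with diagonal d and the entry l k at (k, par k);
  it is triangular for the depth order, so diag_poly S is its characteristic polynomial.\<close>
definition tree_op :: "nat set \<Rightarrow> (nat \<Rightarrow> real) \<Rightarrow> nat \<Rightarrow> real" where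
  "tree_op S x = (\<lambda>k. if k \<in> S then d k * x k + (if k = root then 0 else l k * x (par k)) else 0)"

definition poly_op :: "nat set \<Rightarrow> real poly \<Rightarrow> (nat \<Rightarrow> real) \<Rightarrow> nat \<Rightarrow> real" where
  "poly_op S f x = (\<lambda>k. \<Sum>i<Suc (degree f). coeff f i * (tree_op S ^^ i) x k)"

definition root_vec :: "nat \<Rightarrow> real" where
  "root_vec = (\<lambda>k. if k = root then 1 else 0)"

definition restr :: "nat set \<Rightarrow> (nat \<Rightarrow> real) \<Rightarrow> nat \<Rightarrow> real" where
  "restr T x = (\<lambda>k. if k \<in> T then x k else 0)"

definition subtree :: "nat set \<Rightarrow> bool" where
  "subtree T \<longleftrightarrow> T \<subseteq> V \<and> root \<in> T \<and> (\<forall>k\<in>T. k \<noteq> root \<longrightarrow> par k \<in> T)"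

definition diag_poly :: "nat set \<Rightarrow> real poly" where
  "diag_poly S = (\<Prod>k\<in>S. [:- d k, 1:])"

lemma tree_op_sum: "tree_op S (\<lambda>k. \<Sum>i\<in>I. c i * z i k) = (\<lambda>k. \<Sum>i\<in>I. c i * tree_op S (z i) k)"
  unfolding tree_op_def by (auto simp: sum_distrib_left sum.distrib algebra_simps)

lemma tree_op_scale: "tree_op S (\<lambda>k. c * x k) = (\<lambda>k. c * tree_op S x k)"
  unfolding tree_op_def by (auto simp: algebra_simps)

lemma tree_op_zero: "tree_op S (\<lambda>k. 0) = (\<lambda>k. 0)"
  unfolding tree_op_def by auto

lemma tree_op_outside: "k \<notin> S \<Longrightarrow> tree_op S x k = 0"
  unfolding tree_op_def by simp

lemma poly_op_eq_sum:
  assumes "degree f < N"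
  shows "poly_op S f x = (\<lambda>k. \<Sum>i<N. coeff f i * (tree_op S ^^ i) x k)"
proof
  fix k
  have "(\<Sum>i<N. coeff f i * (tree_op S ^^ i) x k) = (\<Sum>i<Suc (degree f). coeff f i * (tree_op S ^^ i) x k)"
    using assms by (intro sum.mono_neutral_right) (auto simp: coeff_eq_0)
  then show "poly_op S f x k = (\<Sum>i<N. coeff f i * (tree_op S ^^ i) x k)" unfolding poly_op_def by simp
qed

lemma poly_op_0: "poly_op S 0 x = (\<lambda>k. 0)"
  unfolding poly_op_def by simp

lemma poly_op_pCons: "poly_op S (pCons a f) x = (\<lambda>k. a * x k + tree_op S (poly_op S f x) k)"
proof -
  define N where "N = Suc (degree f)"
  have "degree (pCons a f) < Suc N" unfolding N_def by (metis degree_pCons_le le_imp_less_Suc)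
  then have "poly_op S (pCons a f) x = (\<lambda>k. \<Sum>i<Suc N. coeff (pCons a f) i * (tree_op S ^^ i) x k)"
    by (rule poly_op_eq_sum)
  also have "\<dots> = (\<lambda>k. a * x k + (\<Sum>i<N. coeff f i * (tree_op S ^^ Suc i) x k))"
    by (subst sum.lessThan_Suc_shift) simp
  also have "\<dots> = (\<lambda>k. a * x k + tree_op S (poly_op S f x) k)"
    unfolding poly_op_def N_def tree_op_sum by simp
  finally show ?thesis .
qed

lemma poly_op_add: "poly_op S (f + g) x = (\<lambda>k. poly_op S f x k + poly_op S g x k)"
proof -
  define N where "N = Suc (max (degree f) (degree g))"
  have "degree (f + g) < N" "degree f < N" "degree g < N"
    unfolding N_def using degree_add_le_max[of f g] by auto
  then show ?thesis by (simp add: poly_op_eq_sum[of _ N] sum.distrib ring_distribs)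
qed

lemma poly_op_smult: "poly_op S (Polynomial.smult c f) x = (\<lambda>k. c * poly_op S f x k)"
proof -
  have "degree (Polynomial.smult c f) < Suc (degree f)" "degree f < Suc (degree f)" by auto
  then show ?thesis by (simp add: poly_op_eq_sum[of _ "Suc (degree f)"] sum_distrib_left algebra_simps)
qed

lemma poly_op_zero_vec: "poly_op S f (\<lambda>k. 0) = (\<lambda>k. 0)"
proof -
  have "(tree_op S ^^ i) (\<lambda>k. 0) = (\<lambda>k. 0)" for i by (induction i) (auto simp: tree_op_zero)
  then show ?thesis unfolding poly_op_def by simp
qed

lemma poly_op_mult: "poly_op S (f * g) x = poly_op S f (poly_op S g x)"
proof (induction f rule: pCons_induct)
  case (pCons a f)
  have "poly_op S (pCons a f * g) x = poly_op S (Polynomial.smult a g + pCons 0 (f * g)) x" by simp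
  also have "\<dots> = poly_op S (pCons a f) (poly_op S g x)"
    by (simp add: poly_op_add poly_op_smult poly_op_pCons pCons.IH poly_op_0 tree_op_zero)
  finally show ?case .
qed (simp add: poly_op_0)

lemma poly_op_linear: "poly_op S [:- c, 1:] x = (\<lambda>k. tree_op S x k - c * x k)"
  by (simp add: poly_op_pCons poly_op_0 tree_op_zero)

lemma poly_op_const: "poly_op S [:c:] x = (\<lambda>k. c * x k)"
  by (simp add: poly_op_pCons poly_op_0 tree_op_zero)

lemma poly_op_eigenvector:
  assumes "tree_op S v = (\<lambda>k. a * v k)"
  shows "poly_op S g v = (\<lambda>k. poly g a * v k)"
proof (induction g rule: pCons_induct)
  case (pCons b g)
  show ?case by (simp only: poly_op_pCons pCons.IH tree_op_scale assms) (simp add: algebra_simps)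
qed (simp add: poly_op_0)

lemma poly_op_outside:
  assumes "k \<notin> S" "x k = 0"
  shows "poly_op S f x k = 0"
proof (induction f rule: pCons_induct)
  case (pCons a f) then show ?case using assms by (simp add: poly_op_pCons tree_op_outside)
qed (simp add: poly_op_0)

lemma restr_tree_op:
  assumes "T \<subseteq> S" "subtree T"
  shows "restr T (tree_op S x) = tree_op T (restr T x)"
  using assms unfolding restr_def tree_op_def subtree_def by (auto intro!: ext)

lemma restr_poly_op:
  assumes "T \<subseteq> S" "subtree T"
  shows "restr T (poly_op S f x) = poly_op T f (restr T x)"
proof (induction f rule: pCons_induct)
  case (pCons a f)
  have "restr T (poly_op S (pCons a f) x) = (\<lambda>k. a * restr T x k + restr T (tree_op S (poly_op S f x)) k)"
    by (auto simp: poly_op_pCons restr_def)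
  also have "\<dots> = poly_op T (pCons a f) (restr T x)"
    by (simp add: restr_tree_op[OF assms] pCons.IH poly_op_pCons)
  finally show ?case .
qed (simp add: poly_op_0 restr_def)

lemma restr_root_vec: "root \<in> T \<Longrightarrow> restr T root_vec = root_vec"
  unfolding restr_def root_vec_def by auto

lemma degree_diag_poly: "finite S \<Longrightarrow> degree (diag_poly S) = card S"
  unfolding diag_poly_def by (subst degree_prod_eq_sum_degree) auto

lemma subtree_remove_deepest:
  assumes S: "subtree S" and nontrivial: "S \<noteq> {root}"
  obtains lf where "lf \<in> S" "lf \<noteq> root" "subtree (S - {lf})"
proof -
  have fin: "finite S" using S finite_nodes finite_subset unfolding subtree_def by blast
  have ne: "S - {root} \<noteq> {}" using S nontrivial unfolding subtree_def by auto
  have "Max (depth ` (S - {root})) \<in> depth ` (S - {root})" using fin ne by (intro Max_in) auto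
  then obtain lf where lf: "lf \<in> S - {root}" "depth lf = Max (depth ` (S - {root}))"
    by (metis imageE)
  have deepest: "depth k \<le> depth lf" if "k \<in> S - {root}" for k
    using that fin lf(2) by simp
  have "subtree (S - {lf})"
    unfolding subtree_def
  proof (intro conjI ballI impI)
    show "S - {lf} \<subseteq> V" "root \<in> S - {lf}" using S lf unfolding subtree_def by auto
    fix k assume k: "k \<in> S - {lf}" "k \<noteq> root"
    then have "par k \<in> S" "depth (par k) < depth k"
      using S depth_par_less unfolding subtree_def by auto
    with deepest[of k] k show "par k \<in> S - {lf}" by auto
  qed
  then show ?thesis using that lf by blast
qed

lemma nonzero_along_tree:
  assumes S: "subtree S" and r: "r \<noteq> 0"
    and eq: "\<forall>k\<in>S. (d k - a) * y k + (if k = root then r else l k * y (par k)) = 0"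
  shows "k \<in> S \<Longrightarrow> y k \<noteq> 0"
proof (induction "depth k" arbitrary: k rule: less_induct)
  case less
  show ?case
  proof (cases "k = root")
    case True
    then show ?thesis using eq less.prems r by force
  next
    case False
    then have "par k \<in> S" "depth (par k) < depth k" "l k \<noteq> 0"
      using S less.prems depth_par_less edge_weight_nonzero unfolding subtree_def by auto
    then show ?thesis using less.hyps[of "par k"] eq less.prems False by force
  qed
qed

context
  fixes S lf
  assumes S: "subtree S" and lf: "lf \<in> S" "lf \<noteq> root" and S': "subtree (S - {lf})"
    and annihilated: "poly_op (S - {lf}) (diag_poly (S - {lf})) root_vec = (\<lambda>k. 0)"
begin

lemma leaf_vec_outside:
  assumes "k \<noteq> lf"
  shows "poly_op S (diag_poly (S - {lf})) root_vec k = 0"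
proof (cases "k \<in> S")
  case True
  have "restr (S - {lf}) (poly_op S (diag_poly (S - {lf})) root_vec) = (\<lambda>k. 0)"
    using restr_poly_op[OF _ S'] restr_root_vec S' annihilated unfolding subtree_def by auto
  from fun_cong[OF this, of k] show ?thesis using True assms by (simp add: restr_def)
next
  case False
  have "root_vec k = 0" using S False unfolding subtree_def root_vec_def by auto
  then show ?thesis by (rule poly_op_outside[OF False])
qed

lemma leaf_vec_eigen:
  "tree_op S (poly_op S (diag_poly (S - {lf})) root_vec)
     = (\<lambda>k. d lf * poly_op S (diag_poly (S - {lf})) root_vec k)"
proof
  fix k
  have "k \<noteq> root \<Longrightarrow> k \<in> S \<Longrightarrow> k \<noteq> lf \<Longrightarrow> par k \<noteq> lf" using S' unfolding subtree_def by auto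
  moreover have "par lf \<noteq> lf" using S lf depth_par_less unfolding subtree_def by fastforce
  ultimately show "tree_op S (poly_op S (diag_poly (S - {lf})) root_vec) k
      = d lf * poly_op S (diag_poly (S - {lf})) root_vec k"
    using leaf_vec_outside[of k] leaf_vec_outside[of "par k"] lf unfolding tree_op_def
    by (cases "k = lf") auto
qed

text \<open>Divide diag_poly (S - {lf}) by X - d lf with remainder r, which is nonzero as the
  diagonal entries are distinct; the vanishing of the vector on S - {lf} then propagates
  down the tree to its value at the leaf.\<close>
lemma leaf_vec_nonzero: "poly_op S (diag_poly (S - {lf})) root_vec lf \<noteq> 0"
proof -
  define r where "r = poly (diag_poly (S - {lf})) (d lf)"
  have fin: "finite S" using S finite_nodes finite_subset unfolding subtree_def by blast
  have "r = (\<Prod>k\<in>S - {lf}. d lf - d k)" unfolding r_def diag_poly_def by (simp add: poly_prod)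
  moreover have "\<forall>k\<in>S - {lf}. d lf - d k \<noteq> 0"
    using inj_diag S lf unfolding subtree_def inj_on_def by auto
  ultimately have r0: "r \<noteq> 0" using fin by simp
  have "poly (diag_poly (S - {lf}) - [:r:]) (d lf) = 0" unfolding r_def by simp
  then obtain q where "diag_poly (S - {lf}) - [:r:] = [:- d lf, 1:] * q"
    using poly_eq_0_iff_dvd by (metis dvdE)
  then have dq: "diag_poly (S - {lf}) = [:- d lf, 1:] * q + [:r:]" by (simp add: algebra_simps)
  define y where "y = poly_op S q root_vec"
  have v: "poly_op S (diag_poly (S - {lf})) root_vec = (\<lambda>k. tree_op S y k - d lf * y k + r * root_vec k)"
    unfolding dq y_def by (simp only: poly_op_add poly_op_mult poly_op_linear poly_op_const)
  have "\<forall>k\<in>S - {lf}. (d k - d lf) * y k + (if k = root then r else l k * y (par k)) = 0"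
  proof
    fix k assume k: "k \<in> S - {lf}"
    then have "poly_op S (diag_poly (S - {lf})) root_vec k = 0" using leaf_vec_outside by auto
    then have "tree_op S y k - d lf * y k + r * root_vec k = 0" by (simp add: v)
    then show "(d k - d lf) * y k + (if k = root then r else l k * y (par k)) = 0"
      using k unfolding tree_op_def root_vec_def by (auto simp: algebra_simps split: if_splits)
  qed
  moreover have "par lf \<in> S - {lf}" "l lf \<noteq> 0"
    using S lf depth_par_less[of lf] edge_weight_nonzero[of lf] unfolding subtree_def by auto
  ultimately have "l lf * y (par lf) \<noteq> 0" using nonzero_along_tree[OF S' r0] by auto
  moreover have "poly_op S (diag_poly (S - {lf})) root_vec lf = tree_op S y lf - d lf * y lf + r * root_vec lf"
    by (simp add: v)
  moreover have "\<dots> = l lf * y (par lf)" using lf unfolding tree_op_def root_vec_def by simp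
  ultimately show ?thesis by simp
qed

end

lemma poly_op_root_vec_eq_0_iff_root:
  "poly_op {root} f root_vec = (\<lambda>k. 0) \<longleftrightarrow> diag_poly {root} dvd f"
proof -
  have "tree_op {root} root_vec = (\<lambda>k. d root * root_vec k)" unfolding tree_op_def root_vec_def by auto
  then have "poly_op {root} f root_vec = (\<lambda>k. poly f (d root) * root_vec k)" by (rule poly_op_eigenvector)
  then have "poly_op {root} f root_vec = (\<lambda>k. 0) \<longleftrightarrow> poly f (d root) = 0"
    by (auto simp: root_vec_def fun_eq_iff)
  also have "\<dots> \<longleftrightarrow> diag_poly {root} dvd f" by (simp add: diag_poly_def poly_eq_0_iff_dvd)
  finally show ?thesis .
qed

text \<open>Induction on card S: for a deepest node lf, poly_op S (diag_poly (S - {lf})) root_vec is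
  an eigenvector for d lf that is nonzero at lf.\<close>
lemma poly_op_root_vec_eq_0_iff:
  assumes "subtree S"
  shows "poly_op S f root_vec = (\<lambda>k. 0) \<longleftrightarrow> diag_poly S dvd f"
  using assms
proof (induction "card S" arbitrary: S f rule: less_induct)
  case less
  note S = less.prems
  have fin: "finite S" using S finite_nodes finite_subset unfolding subtree_def by blast
  show ?case
  proof (cases "S = {root}")
    case True
    then show ?thesis using poly_op_root_vec_eq_0_iff_root by simp
  next
    case False
    obtain lf where lf: "lf \<in> S" "lf \<noteq> root" and S': "subtree (S - {lf})"
      using subtree_remove_deepest[OF S False] by blast
    have "card (S - {lf}) < card S" using fin lf by (meson card_Diff1_less)
    note IH = less.hyps[OF this S']
    define v where "v = poly_op S (diag_poly (S - {lf})) root_vec"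
    have annihilated: "poly_op (S - {lf}) (diag_poly (S - {lf})) root_vec = (\<lambda>k. 0)" using IH by simp
    have eig: "tree_op S v = (\<lambda>k. d lf * v k)" and vlf: "v lf \<noteq> 0"
      unfolding v_def using leaf_vec_eigen[OF S lf S' annihilated] leaf_vec_nonzero[OF S lf S' annihilated] .
    have diag: "diag_poly S = [:- d lf, 1:] * diag_poly (S - {lf})"
      unfolding diag_poly_def using fin lf by (simp add: prod.remove)
    show ?thesis
    proof
      assume f: "poly_op S f root_vec = (\<lambda>k. 0)"
      have "restr (S - {lf}) (poly_op S f root_vec) = (\<lambda>k. 0)" using f by (simp add: restr_def)
      then have "poly_op (S - {lf}) f root_vec = (\<lambda>k. 0)"
        using restr_poly_op[OF _ S'] restr_root_vec S' unfolding subtree_def by auto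
      then obtain g where g: "f = diag_poly (S - {lf}) * g" using IH by (auto elim: dvdE)
      have "poly_op S f root_vec = poly_op S g v" unfolding g v_def by (simp add: mult.commute poly_op_mult)
      also have "\<dots> = (\<lambda>k. poly g (d lf) * v k)" by (rule poly_op_eigenvector[OF eig])
      finally have "poly g (d lf) = 0" using f vlf by (metis mult_eq_0_iff)
      then have "[:- d lf, 1:] dvd g" by (simp add: poly_eq_0_iff_dvd)
      then show "diag_poly S dvd f" unfolding diag g by (metis mult.commute mult_dvd_mono dvd_refl)
    next
      assume "diag_poly S dvd f"
      then obtain g where g: "f = diag_poly S * g" by (rule dvdE)
      have "poly_op S (diag_poly S) root_vec = poly_op S [:- d lf, 1:] v"
        unfolding diag v_def by (simp only: poly_op_mult)
      also have "\<dots> = (\<lambda>k. 0)" unfolding poly_op_linear eig by simp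
      finally show "poly_op S f root_vec = (\<lambda>k. 0)"
        unfolding g by (simp add: mult.commute poly_op_mult poly_op_zero_vec)
    qed
  qed
qed

lemma krylov_root_vec_independent:
  assumes z: "\<forall>k\<in>V. (\<Sum>i<card V. c i * (tree_op V ^^ i) root_vec k) = 0"
  shows "\<forall>i<card V. c i = 0"
proof -
  have V: "subtree V" unfolding subtree_def using root_node par_node by auto
  define f where "f = (\<Sum>i<card V. monom (c i) i)"
  have cf: "coeff f i = (if i < card V then c i else 0)" for i
    unfolding f_def by (simp add: coeff_sum coeff_monom)
  have df: "degree f < card V"
  proof (cases "f = 0")
    case True then show ?thesis using root_node finite_nodes card_gt_0_iff by auto
  next
    case False
    then have "coeff f (degree f) \<noteq> 0" by simp
    then show ?thesis using cf by (metis not_less)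
  qed
  have "poly_op V f root_vec = (\<lambda>k. \<Sum>i<card V. c i * (tree_op V ^^ i) root_vec k)"
    using poly_op_eq_sum[OF df] cf by simp
  also have "\<dots> = (\<lambda>k. 0)"
  proof
    fix k show "(\<Sum>i<card V. c i * (tree_op V ^^ i) root_vec k) = 0"
    proof (cases "k \<in> V")
      case False
      have "(tree_op V ^^ i) root_vec k = 0" for i
        using False root_node by (cases i) (auto simp: root_vec_def tree_op_outside)
      then show ?thesis by simp
    qed (use z in auto)
  qed
  finally have "diag_poly V dvd f" using poly_op_root_vec_eq_0_iff[OF V] by blast
  then have "f = 0" using df degree_diag_poly[OF finite_nodes] by (metis dvd_imp_degree_le leD)
  then show ?thesis using cf by (metis coeff_0)
qed

end

section \<open>Weighted Laplacians of the neighbor graph\<close>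

definition laplacian :: "nat \<Rightarrow> (nat \<Rightarrow> nat \<Rightarrow> bool) \<Rightarrow> (nat \<Rightarrow> nat \<Rightarrow> real) \<Rightarrow> real mat" where
  "laplacian m nbr W = mat m m (\<lambda>(a, b).
     (if a = b then (\<Sum>j\<in>nbhd m nbr a. W a j) else 0) - (if b \<in> nbhd m nbr a then W a b else 0))"

text \<open>Every agent a other than the root q listens only to its parent, with weight a + 1, so that
  the Laplacian has the distinct diagonal entries 0 (at q) and a + 1.\<close>
definition tree_weights :: "nat \<Rightarrow> (nat \<Rightarrow> nat) \<Rightarrow> nat \<Rightarrow> nat \<Rightarrow> real" where
  "tree_weights q par a j = (if a \<noteq> q \<and> j = par a then real a + 1 else 0)"

lemma unitv_carrier: "unitv m i \<in> carrier_mat m 1"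
  unfolding unitv_def by simp

lemma laplacian_carrier: "laplacian m nbr W \<in> carrier_mat m m"
  unfolding laplacian_def by simp

lemma finite_nbhd: "finite (nbhd m nbr a)"
  unfolding nbhd_def by simp

lemma strongly_connected_spanning_tree:
  assumes sc: "strongly_connected m nbr" and q: "q < m"
  obtains par depth :: "nat \<Rightarrow> nat"
  where "\<forall>a<m. a \<noteq> q \<longrightarrow> par a < m \<and> nbr a (par a) \<and> depth (par a) < depth a"
proof -
  define R where "R = neighbor_arcs m nbr"
  define depth where "depth a = (LEAST k. (q, a) \<in> R ^^ k)" for a
  have "\<exists>p. a < m \<and> a \<noteq> q \<longrightarrow> p < m \<and> nbr a p \<and> depth p < depth a" for a
  proof (cases "a < m \<and> a \<noteq> q")
    case True
    then have "(q, a) \<in> R\<^sup>*" using sc q unfolding strongly_connected_def R_def by blast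
    then obtain k where "(q, a) \<in> R ^^ k" using rtrancl_power by blast
    then have qa: "(q, a) \<in> R ^^ depth a" unfolding depth_def by (rule LeastI)
    then have "depth a \<noteq> 0" using True by (metis relpow_0_E)
    then obtain k where k: "depth a = Suc k" by (cases "depth a") auto
    then obtain p where p: "(q, p) \<in> R ^^ k" "(p, a) \<in> R" using qa by auto
    have "depth p \<le> k" unfolding depth_def using p(1) by (rule Least_le)
    then show ?thesis using p(2) k unfolding R_def neighbor_arcs_def by auto
  qed blast
  then obtain par where "\<forall>a. a < m \<and> a \<noteq> q \<longrightarrow> par a < m \<and> nbr a (par a) \<and> depth (par a) < depth a"
    by metis
  then show ?thesis using that by blast
qed

lemma pow_mat_Suc_left:
  assumes "A \<in> carrier_mat N N"
  shows "A ^\<^sub>m Suc k = A * A ^\<^sub>m k"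
proof (induction k)
  case (Suc k)
  have "A ^\<^sub>m Suc (Suc k) = (A * A ^\<^sub>m k) * A" using Suc by simp
  also have "\<dots> = A * (A ^\<^sub>m k * A)" using assms by (intro assoc_mult_mat) auto
  finally show ?case by simp
qed (use assms in simp)

lemma det_ctrb_mat_if_krylov_independent:
  assumes L: "L \<in> carrier_mat m m" and g: "g \<in> carrier_mat m 1"
    and indep: "\<And>c. (\<And>a. a < m \<Longrightarrow> (\<Sum>i<m. c i * (L ^\<^sub>m i * g) $$ (a, 0)) = 0) \<Longrightarrow> \<forall>i<m. c i = 0"
  shows "det (ctrb_mat L g m) \<noteq> 0"
proof -
  have C: "ctrb_mat L g m \<in> carrier_mat m m" using ctrb_mat_carrier[OF L g, of m] by simp
  have "v = 0\<^sub>v m" if v: "v \<in> carrier_vec m" "ctrb_mat L g m *\<^sub>v v = 0\<^sub>v m" for v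
  proof -
    have "(\<Sum>i<m. v $ i * (L ^\<^sub>m i * g) $$ (a, 0)) = 0" if a: "a < m" for a
    proof -
      have "0 = (ctrb_mat L g m *\<^sub>v v) $ a" using v a by simp
      also have "\<dots> = (\<Sum>i<m. ctrb_mat L g m $$ (a, i) * v $ i)"
        using C v(1) a by (simp add: scalar_prod_def atLeast0LessThan)
      also have "\<dots> = (\<Sum>i<m. v $ i * (L ^\<^sub>m i * g) $$ (a, 0))"
        using a by (intro sum.cong refl) (simp add: index_ctrb_mat[OF L g])
      finally show ?thesis by simp
    qed
    then have "\<forall>i<m. v $ i = 0" by (rule indep)
    then show ?thesis using v by (intro eq_vecI) auto
  qed
  then show ?thesis using det_0_iff_vec_prod_zero_field[OF C] by blast
qed

lemma laplacian_tree_weights_row: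
  assumes a: "a < m" and par: "a \<noteq> q \<Longrightarrow> par a < m \<and> nbr a (par a) \<and> par a \<noteq> a"
  shows "(\<Sum>b<m. laplacian m nbr (tree_weights q par) $$ (a, b) * z b)
    = (if a = q then 0 else (real a + 1) * z a - (real a + 1) * z (par a))"
proof (cases "a = q")
  case True
  then show ?thesis using a unfolding laplacian_def tree_weights_def by simp
next
  case False
  then have pa: "par a < m" "par a \<in> nbhd m nbr a" "par a \<noteq> a" using par a unfolding nbhd_def by auto
  have "(\<Sum>j\<in>nbhd m nbr a. tree_weights q par a j) = real a + 1"
    unfolding tree_weights_def using False pa finite_nbhd[of m nbr a] by simp
  then have "laplacian m nbr (tree_weights q par) $$ (a, b)
      = (if b = a then real a + 1 else 0) - (if b = par a then real a + 1 else 0)" if "b < m" for b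
    using a that pa False unfolding laplacian_def by (auto simp: tree_weights_def)
  then have "(\<Sum>b<m. laplacian m nbr (tree_weights q par) $$ (a, b) * z b)
      = (\<Sum>b<m. (if b = a then (real a + 1) * z b else 0) - (if b = par a then (real a + 1) * z b else 0))"
    by (intro sum.cong refl) (simp add: left_diff_distrib)
  also have "\<dots> = (real a + 1) * z a - (real a + 1) * z (par a)" using a pa by (simp add: sum_subtractf)
  finally show ?thesis using False by simp
qed

text \<open>On a spanning tree the Laplacian acts as the tree operator with diagonal d and edge
  weights l below.\<close>
lemma det_ctrb_laplacian_tree:
  fixes par depth :: "nat \<Rightarrow> nat"
  assumes q: "q < m" and tree: "\<forall>a<m. a \<noteq> q \<longrightarrow> par a < m \<and> nbr a (par a) \<and> depth (par a) < depth a"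
  shows "det (ctrb_mat (laplacian m nbr (tree_weights q par)) (unitv m q) m) \<noteq> 0"
proof -
  define d where "d a = (if a = q then 0 else real a + 1)" for a
  define l where "l a = - (real a + 1)" for a :: nat
  interpret rooted_tree "{..<m}" q par depth d l
    by unfold_locales (use q tree in \<open>auto simp: d_def l_def inj_on_def split: if_splits\<close>)
  let ?L = "laplacian m nbr (tree_weights q par)"
  have L: "?L \<in> carrier_mat m m" by (rule laplacian_carrier)
  have e: "unitv m q \<in> carrier_mat m 1" by (rule unitv_carrier)
  have row: "(\<Sum>b<m. ?L $$ (a, b) * z b) = tree_op {..<m} z a" if a: "a < m" for a z
  proof -
    have "a \<noteq> q \<Longrightarrow> par a < m \<and> nbr a (par a) \<and> par a \<noteq> a" using tree a by fastforce
    from laplacian_tree_weights_row[where m=m and q=q and nbr=nbr and par=par, OF a this] show ?thesis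
      using a unfolding tree_op_def d_def l_def by (simp add: algebra_simps)
  qed
  have krylov: "(?L ^\<^sub>m k * unitv m q) $$ (a, 0) = (tree_op {..<m} ^^ k) root_vec a"
    if "a < m" for k a
    using that
  proof (induction k arbitrary: a)
    case 0
    have "?L ^\<^sub>m 0 * unitv m q = unitv m q" using L e by simp
    then show ?case using 0 by (simp add: unitv_def root_vec_def)
  next
    case (Suc k)
    have "(?L ^\<^sub>m Suc k * unitv m q) $$ (a, 0) = (?L * (?L ^\<^sub>m k * unitv m q)) $$ (a, 0)"
      unfolding pow_mat_Suc_left[OF L] by (simp add: assoc_mult_mat[OF L pow_carrier_mat[OF L] e])
    also have "\<dots> = (\<Sum>b<m. ?L $$ (a, b) * (?L ^\<^sub>m k * unitv m q) $$ (b, 0))"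
      using L e Suc.prems by (simp add: scalar_prod_def atLeast0LessThan)
    also have "\<dots> = (\<Sum>b<m. ?L $$ (a, b) * (tree_op {..<m} ^^ k) root_vec b)"
      using Suc.IH by simp
    also have "\<dots> = (tree_op {..<m} ^^ Suc k) root_vec a" using row[OF Suc.prems] by simp
    finally show ?case .
  qed
  show ?thesis
  proof (rule det_ctrb_mat_if_krylov_independent[OF L e])
    fix c assume "\<And>a. a < m \<Longrightarrow> (\<Sum>i<m. c i * (?L ^\<^sub>m i * unitv m q) $$ (a, 0)) = 0"
    then have "\<forall>a\<in>{..<m}. (\<Sum>i<card {..<m}. c i * (tree_op {..<m} ^^ i) root_vec a) = 0"
      using krylov by simp
    then show "\<forall>i<m. c i = 0" using krylov_root_vec_independent by simp
  qed
qed

lemma det_ctrb_kron_laplacian_tree: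
  fixes par depth :: "nat \<Rightarrow> nat"
  assumes q: "q < m" and tree: "\<forall>a<m. a \<noteq> q \<longrightarrow> par a < m \<and> nbr a (par a) \<and> depth (par a) < depth a"
  shows "det (ctrb_mat (kron (laplacian m nbr (tree_weights q par)) (1\<^sub>m n)) (kron (unitv m q) (1\<^sub>m n)) m) \<noteq> 0"
proof -
  have "ctrb_mat (laplacian m nbr (tree_weights q par)) (unitv m q) m \<in> carrier_mat m m"
    using ctrb_mat_carrier[OF laplacian_carrier unitv_carrier, of m] by simp
  then show ?thesis
    using det_kron_one_nonzero det_ctrb_laplacian_tree[where m=m and q=q and nbr=nbr and par=par and depth=depth, OF q tree]
    by (simp add: ctrb_mat_kron_one[OF laplacian_carrier unitv_carrier])
qed

section \<open>Block structure of the closed loop\<close>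

abbreviation unit_block :: "nat \<Rightarrow> nat \<Rightarrow> nat \<Rightarrow> real mat" where
  "unit_block n m i \<equiv> kron (unitv m i) (1\<^sub>m n)"

abbreviation diff_block :: "nat \<Rightarrow> nat \<Rightarrow> nat \<Rightarrow> nat \<Rightarrow> real mat" where
  "diff_block n m i j \<equiv> kron (transpose_mat (unitv m i) - transpose_mat (unitv m j)) (1\<^sub>m n)"

abbreviation diff_output :: "nat \<Rightarrow> nat \<Rightarrow> (nat \<Rightarrow> nat \<Rightarrow> bool) \<Rightarrow> nat \<Rightarrow> real mat" where
  "diff_output n m nbr i \<equiv> vcat (n * m) (map (diff_block n m i) (sorted_list_of_set (nbhd m nbr i)))"

definition consensus_gain :: "nat \<Rightarrow> nat \<Rightarrow> (nat \<Rightarrow> nat \<Rightarrow> bool) \<Rightarrow> (nat \<Rightarrow> nat \<Rightarrow> real) \<Rightarrow> nat \<Rightarrow> real mat" where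
  "consensus_gain n m nbr W i = hcat n (map (\<lambda>j. W i j \<cdot>\<^sub>m 1\<^sub>m n) (sorted_list_of_set (nbhd m nbr i)))"

lemma unit_block_carrier: "unit_block n m i \<in> carrier_mat (n * m) n"
  using kron_one_carrier[of "unitv m i" m 1 n] by (simp add: unitv_def mult.commute)

lemma diff_block_carrier: "diff_block n m i j \<in> carrier_mat n (n * m)"
proof -
  have "transpose_mat (unitv m i) - transpose_mat (unitv m j) \<in> carrier_mat 1 m"
    unfolding unitv_def by auto
  from kron_one_carrier[OF this, of n] show ?thesis by (simp add: mult.commute)
qed

lemma consensus_gain_carrier: "consensus_gain n m nbr W i \<in> carrier_mat n (n * card (nbhd m nbr i))"
  using hcat_carrier[of "map (\<lambda>j. W i j \<cdot>\<^sub>m 1\<^sub>m n) (sorted_list_of_set (nbhd m nbr i))" n n]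
  unfolding consensus_gain_def by (simp add: finite_nbhd mult.commute)

lemma diff_output_carrier: "diff_output n m nbr i \<in> carrier_mat (n * card (nbhd m nbr i)) (n * m)"
  using vcat_carrier[of "map (diff_block n m i) (sorted_list_of_set (nbhd m nbr i))" n "n * m"]
    diff_block_carrier by (simp add: finite_nbhd mult.commute)

lemma index_diff_block:
  assumes b: "b < n" and c: "c < n * m"
  shows "diff_block n m i j $$ (b, c)
    = (if b = c mod n then (if c div n = i then 1 else 0) - (if c div n = j then 1 else 0) else 0)"
proof -
  have "c div n < m" using c by (simp add: less_mult_imp_div_less mult.commute)
  moreover have "b div n = 0" "b mod n = b" using b by auto
  ultimately show ?thesis using b c by (subst index_kron_one) (auto simp: unitv_def mult.commute)
qed

lemma index_unit_block_mult:
  assumes G: "G \<in> carrier_mat n (n * m)" and r: "r < n * m" and c: "c < n * m"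
  shows "(unit_block n m i * G) $$ (r, c) = (if r div n = i then G $$ (r mod n, c) else 0)"
proof -
  have n: "n > 0" using r by (cases n) auto
  have "(unit_block n m i * G) $$ (r, c) = (\<Sum>a<n. unit_block n m i $$ (r, a) * G $$ (a, c))"
    using unit_block_carrier[where n=n and m=m and i=i] G r c by (simp add: scalar_prod_def atLeast0LessThan)
  also have "\<dots> = (\<Sum>a<n. if a = r mod n then (if r div n = i then G $$ (r mod n, c) else 0) else 0)"
    using r less_mult_imp_div_less[of r m n]
    by (intro sum.cong refl) (auto simp: index_kron_one unitv_def mult.commute)
  also have "\<dots> = (if r div n = i then G $$ (r mod n, c) else 0)" using n by (subst sum.delta) auto
  finally show ?thesis .
qed

lemma sum_laplacian_row:
  assumes "a < m" "c < m"
  shows "(\<Sum>j\<in>nbhd m nbr a. W a j * ((if c = a then 1 else 0) - (if c = j then 1 else 0)))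
    = laplacian m nbr W $$ (a, c)"
proof -
  have "(\<Sum>j\<in>nbhd m nbr a. W a j * ((if c = a then 1 else 0) - (if c = j then 1 else 0)))
      = (\<Sum>j\<in>nbhd m nbr a. if c = a then W a j else 0) - (\<Sum>j\<in>nbhd m nbr a. if c = j then W a j else 0)"
    by (subst sum_subtractf[symmetric], rule sum.cong) auto
  also have "\<dots> = laplacian m nbr W $$ (a, c)"
    using assms finite_nbhd[of m nbr a] unfolding laplacian_def by (auto simp: sum.delta)
  finally show ?thesis .
qed

lemma index_consensus_gain_mult:
  assumes b: "b < n" and c: "c < n * m" and i: "i < m"
  shows "(consensus_gain n m nbr W i * diff_output n m nbr i) $$ (b, c)
    = (if b = c mod n then laplacian m nbr W $$ (i, c div n) else 0)"
proof -
  let ?js = "sorted_list_of_set (nbhd m nbr i)"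
  let ?\<delta> = "\<lambda>j. (if c div n = i then 1 else 0) - (if c div n = j then 1 else 0) :: real"
  have "(consensus_gain n m nbr W i * diff_output n m nbr i) $$ (b, c)
      = (\<Sum>k<length ?js. ((W i (?js ! k) \<cdot>\<^sub>m 1\<^sub>m n) * diff_block n m i (?js ! k)) $$ (b, c))"
  proof -
    have Ms: "\<forall>M\<in>set (map (\<lambda>j. W i j \<cdot>\<^sub>m 1\<^sub>m n) ?js). M \<in> carrier_mat n n" by auto
    have Ns: "\<forall>N\<in>set (map (diff_block n m i) ?js). N \<in> carrier_mat n (n * m)"
      using diff_block_carrier by auto
    show ?thesis unfolding consensus_gain_def using index_hcat_mult_vcat[OF Ms Ns _ b c] by simp
  qed
  also have "\<dots> = (\<Sum>k<length ?js. W i (?js ! k) * (if b = c mod n then ?\<delta> (?js ! k) else 0))"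
  proof (intro sum.cong refl)
    fix k
    let ?j = "?js ! k"
    have D: "diff_block n m i ?j \<in> carrier_mat n (n * m)" by (rule diff_block_carrier)
    have "(W i ?j \<cdot>\<^sub>m 1\<^sub>m n) * diff_block n m i ?j = W i ?j \<cdot>\<^sub>m diff_block n m i ?j"
      using mult_smult_assoc_mat[OF one_carrier_mat D] D by simp
    then show "((W i ?j \<cdot>\<^sub>m 1\<^sub>m n) * diff_block n m i ?j) $$ (b, c)
        = W i ?j * (if b = c mod n then ?\<delta> ?j else 0)"
      using b c D by (simp add: index_diff_block)
  qed
  also have "\<dots> = (\<Sum>j\<in>nbhd m nbr i. W i j * (if b = c mod n then ?\<delta> j else 0))"
    using sum.distinct_set_conv_list[of ?js "\<lambda>j. W i j * (if b = c mod n then ?\<delta> j else 0)"]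
    by (simp add: finite_nbhd sum_list_sum_nth atLeast0LessThan)
  also have "\<dots> = (if b = c mod n then laplacian m nbr W $$ (i, c div n) else 0)"
    using sum_laplacian_row[where c="c div n" and nbr=nbr and W=W, OF i] c
    by (simp add: less_mult_imp_div_less mult.commute)
  finally show ?thesis .
qed

lemma msum_unit_block_consensus:
  "msum (n * m) (n * m)
     (\<lambda>i. unit_block n m i * (consensus_gain n m nbr W i * diff_output n m nbr i)) {..<m}
   = kron (laplacian m nbr W) (1\<^sub>m n)"
proof (rule eq_matI)
  fix r c assume "r < dim_row (kron (laplacian m nbr W) (1\<^sub>m n))" "c < dim_col (kron (laplacian m nbr W) (1\<^sub>m n))"
  then have r: "r < n * m" and c: "c < n * m"
    using kron_one_carrier[OF laplacian_carrier, of m nbr W n] by (auto simp: mult.commute)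
  have n: "n > 0" using r by (cases n) auto
  have rd: "r div n < m" using r by (simp add: less_mult_imp_div_less mult.commute)
  have GC: "consensus_gain n m nbr W i * diff_output n m nbr i \<in> carrier_mat n (n * m)" for i
    using consensus_gain_carrier diff_output_carrier by (rule mult_carrier_mat)
  have "msum (n * m) (n * m) (\<lambda>i. unit_block n m i * (consensus_gain n m nbr W i * diff_output n m nbr i)) {..<m} $$ (r, c)
      = (\<Sum>i<m. if r div n = i then (consensus_gain n m nbr W i * diff_output n m nbr i) $$ (r mod n, c) else 0)"
    using r c by (simp add: msum_def index_unit_block_mult[OF GC r c])
  also have "\<dots> = (if r mod n = c mod n then laplacian m nbr W $$ (r div n, c div n) else 0)"
    using rd n c by (simp add: index_consensus_gain_mult)
  also have "\<dots> = kron (laplacian m nbr W) (1\<^sub>m n) $$ (r, c)"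
    using r c laplacian_carrier[of m nbr W] by (subst index_kron_one) (auto simp: mult.commute)
  finally show "msum (n * m) (n * m) (\<lambda>i. unit_block n m i * (consensus_gain n m nbr W i * diff_output n m nbr i)) {..<m} $$ (r, c)
      = kron (laplacian m nbr W) (1\<^sub>m n) $$ (r, c)" .
qed (use kron_one_carrier[OF laplacian_carrier, of m nbr W n] in \<open>auto simp: msum_def mult.commute\<close>)

lemma msum_cong: "(\<And>i. i \<in> I \<Longrightarrow> f i = g i) \<Longrightarrow> msum nr nc f I = msum nr nc g I"
  unfolding msum_def by (metis (no_types, lifting) sum.cong)

lemma msum_add_smult:
  fixes f g :: "'i \<Rightarrow> 'a::semiring_0 mat"
  assumes "\<And>i. i \<in> I \<Longrightarrow> f i \<in> carrier_mat nr nc" "\<And>i. i \<in> I \<Longrightarrow> g i \<in> carrier_mat nr nc"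
  shows "msum nr nc (\<lambda>i. f i + c \<cdot>\<^sub>m g i) I = msum nr nc f I + c \<cdot>\<^sub>m msum nr nc g I"
proof (rule eq_matI)
  fix i j assume "i < dim_row (msum nr nc f I + c \<cdot>\<^sub>m msum nr nc g I)"
    "j < dim_col (msum nr nc f I + c \<cdot>\<^sub>m msum nr nc g I)"
  then have ij: "i < nr" "j < nc" by (simp_all add: msum_def)
  have "(\<Sum>k\<in>I. (f k + c \<cdot>\<^sub>m g k) $$ (i, j)) = (\<Sum>k\<in>I. f k $$ (i, j) + c * g k $$ (i, j))"
  proof (rule sum.cong[OF refl])
    fix k assume k: "k \<in> I"
    show "(f k + c \<cdot>\<^sub>m g k) $$ (i, j) = f k $$ (i, j) + c * g k $$ (i, j)"
      using carrier_matD[OF assms(1)[OF k]] carrier_matD[OF assms(2)[OF k]] ij by simp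
  qed
  then show "msum nr nc (\<lambda>i. f i + c \<cdot>\<^sub>m g i) I $$ (i, j) = (msum nr nc f I + c \<cdot>\<^sub>m msum nr nc g I) $$ (i, j)"
    using ij by (simp add: msum_def sum.distrib flip: sum_distrib_left)
qed (simp_all add: msum_def)

lemma msum_closed_loop:
  assumes P: "\<forall>i<m. P i \<in> carrier_mat n (n * m)"
  shows "msum (n * m) (n * m)
      (\<lambda>i. unit_block n m i * (P i + (t \<cdot>\<^sub>m consensus_gain n m nbr W i) * diff_output n m nbr i)) {..<m}
    = msum (n * m) (n * m) (\<lambda>i. unit_block n m i * P i) {..<m} + t \<cdot>\<^sub>m kron (laplacian m nbr W) (1\<^sub>m n)"
proof -
  let ?GC = "\<lambda>i. consensus_gain n m nbr W i * diff_output n m nbr i"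
  have B: "unit_block n m i \<in> carrier_mat (n * m) n" for i by (rule unit_block_carrier)
  have GC: "?GC i \<in> carrier_mat n (n * m)" for i
    using consensus_gain_carrier diff_output_carrier by (rule mult_carrier_mat)
  have "unit_block n m i * (P i + (t \<cdot>\<^sub>m consensus_gain n m nbr W i) * diff_output n m nbr i)
      = unit_block n m i * P i + t \<cdot>\<^sub>m (unit_block n m i * ?GC i)" if "i \<in> {..<m}" for i
    using mult_smult_assoc_mat[OF consensus_gain_carrier diff_output_carrier]
      mult_add_distrib_mat[OF B _ smult_carrier_mat[OF GC]] mult_smult_distrib[OF B GC] P that
    by simp
  then have "msum (n * m) (n * m)
      (\<lambda>i. unit_block n m i * (P i + (t \<cdot>\<^sub>m consensus_gain n m nbr W i) * diff_output n m nbr i)) {..<m}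
    = msum (n * m) (n * m) (\<lambda>i. unit_block n m i * P i + t \<cdot>\<^sub>m (unit_block n m i * ?GC i)) {..<m}"
    by (rule msum_cong)
  also have "\<dots> = msum (n * m) (n * m) (\<lambda>i. unit_block n m i * P i) {..<m}
      + t \<cdot>\<^sub>m msum (n * m) (n * m) (\<lambda>i. unit_block n m i * ?GC i) {..<m}"
    using B GC P by (intro msum_add_smult) (auto intro: mult_carrier_mat)
  finally show ?thesis unfolding msum_unit_block_consensus .
qed

section \<open>Polynomial families of matrices\<close>

definition polyfun :: "(real \<Rightarrow> real) \<Rightarrow> bool" where
  "polyfun f \<longleftrightarrow> (\<exists>p. \<forall>s. f s = poly p s)"

lemma polyfun_const[simp]: "polyfun (\<lambda>s. c)"
  unfolding polyfun_def by (rule exI[of _ "[:c:]"]) simp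

lemma polyfun_id[simp]: "polyfun (\<lambda>s. s)"
  unfolding polyfun_def by (rule exI[of _ "[:0, 1:]"]) simp

lemma polyfun_add: "polyfun f \<Longrightarrow> polyfun g \<Longrightarrow> polyfun (\<lambda>s. f s + g s)"
  unfolding polyfun_def by (metis poly_add)

lemma polyfun_minus: "polyfun f \<Longrightarrow> polyfun (\<lambda>s. - f s)"
  unfolding polyfun_def by (metis poly_minus)

lemma polyfun_diff: "polyfun f \<Longrightarrow> polyfun g \<Longrightarrow> polyfun (\<lambda>s. f s - g s)"
  unfolding polyfun_def by (metis poly_diff)

lemma polyfun_mult: "polyfun f \<Longrightarrow> polyfun g \<Longrightarrow> polyfun (\<lambda>s. f s * g s)"
  unfolding polyfun_def by (metis poly_mult)

lemma polyfun_divide_const: "polyfun f \<Longrightarrow> polyfun (\<lambda>s. f s / c)"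
  unfolding polyfun_def by (metis divide_inverse mult.commute poly_smult)

lemma polyfun_sum: "\<forall>i\<in>I. polyfun (f i) \<Longrightarrow> polyfun (\<lambda>s. \<Sum>i\<in>I. f i s)"
proof -
  assume "\<forall>i\<in>I. polyfun (f i)"
  then obtain P where "\<forall>i\<in>I. \<forall>s. f i s = poly (P i) s" unfolding polyfun_def by metis
  then have "\<forall>s. (\<Sum>i\<in>I. f i s) = poly (\<Sum>i\<in>I. P i) s" by (simp add: poly_sum)
  then show ?thesis unfolding polyfun_def by blast
qed

lemma polyfun_prod: "\<forall>i\<in>I. polyfun (f i) \<Longrightarrow> polyfun (\<lambda>s. \<Prod>i\<in>I. f i s)"
proof -
  assume "\<forall>i\<in>I. polyfun (f i)"
  then obtain P where "\<forall>i\<in>I. \<forall>s. f i s = poly (P i) s" unfolding polyfun_def by metis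
  then have "\<forall>s. (\<Prod>i\<in>I. f i s) = poly (\<Prod>i\<in>I. P i) s" by (simp add: poly_prod)
  then show ?thesis unfolding polyfun_def by blast
qed

lemma polyfun_nonzero_avoiding:
  fixes f :: "nat \<Rightarrow> real \<Rightarrow> real"
  assumes E: "finite E" and f: "\<forall>q<m. polyfun (f q) \<and> (\<exists>s. f q s \<noteq> 0)"
  obtains s where "s \<notin> E" "\<forall>q<m. f q s \<noteq> 0"
proof -
  from f obtain P where P: "\<forall>q<m. \<forall>s. f q s = poly (P q) s" unfolding polyfun_def by metis
  have P0: "P q \<noteq> 0" if "q < m" for q using P f that by fastforce
  have "finite (\<Union>q<m. {s. poly (P q) s = 0})" using P0 poly_roots_finite by (intro finite_UN_I finite_lessThan) auto
  then have "finite (E \<union> (\<Union>q<m. {s. poly (P q) s = 0}))" using E by blast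
  then obtain s where "s \<notin> E \<union> (\<Union>q<m. {s. poly (P q) s = 0})"
    using ex_new_if_finite[OF infinite_UNIV_char_0] by blast
  then show ?thesis using that P by auto
qed

lemma lagrange_interpolation:
  fixes w :: "nat \<Rightarrow> 'a \<Rightarrow> 'b \<Rightarrow> real"
  obtains W where "\<And>a b. polyfun (\<lambda>s. W s a b)" "\<And>x. x < m \<Longrightarrow> W (real x) = w x"
proof
  define L where "L x s = (\<Prod>y\<in>{..<m} - {x}. (s - real y) / (real x - real y))" for x s
  have L: "L y (real x) = (if y = x then 1 else 0)" if "y < m" "x < m" for x y
  proof (cases "y = x")
    case False
    then have "x \<in> {..<m} - {y}" using that by auto
    then show ?thesis unfolding L_def using False by (intro trans[OF prod_zero]) auto
  qed (simp add: L_def)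
  show "polyfun (\<lambda>s. \<Sum>x<m. L x s * w x a b)" for a b
    unfolding L_def by (intro polyfun_sum polyfun_prod ballI polyfun_mult polyfun_divide_const
        polyfun_diff polyfun_id polyfun_const)
  show "(\<lambda>a b. \<Sum>y<m. L y (real x) * w y a b) = w x" if "x < m" for x
    using that by (simp add: L if_distrib[of "\<lambda>c. c * _"] cong: if_cong)
qed

definition polyfun_mat :: "(real \<Rightarrow> real mat) \<Rightarrow> nat \<Rightarrow> nat \<Rightarrow> bool" where
  "polyfun_mat A nr nc \<longleftrightarrow> (\<forall>s. A s \<in> carrier_mat nr nc) \<and> (\<forall>i<nr. \<forall>j<nc. polyfun (\<lambda>s. A s $$ (i, j)))"

lemma polyfun_mat_const: "A \<in> carrier_mat nr nc \<Longrightarrow> polyfun_mat (\<lambda>s. A) nr nc"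
  unfolding polyfun_mat_def by simp

lemma polyfun_mat_add:
  assumes A: "polyfun_mat A nr nc" and B: "polyfun_mat B nr nc"
  shows "polyfun_mat (\<lambda>s. A s + B s) nr nc"
  unfolding polyfun_mat_def
proof (intro conjI allI impI)
  fix s show "A s + B s \<in> carrier_mat nr nc" using A B unfolding polyfun_mat_def by auto
next
  fix i j assume ij: "i < nr" "j < nc"
  have "(A s + B s) $$ (i, j) = A s $$ (i, j) + B s $$ (i, j)" for s
    using A B ij unfolding polyfun_mat_def by (metis carrier_matD index_add_mat(1))
  moreover have "polyfun (\<lambda>s. A s $$ (i, j) + B s $$ (i, j))"
    using A B ij unfolding polyfun_mat_def by (auto intro!: polyfun_add)
  ultimately show "polyfun (\<lambda>s. (A s + B s) $$ (i, j))" by simp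
qed

lemma polyfun_mat_smult:
  assumes c: "polyfun c" and A: "polyfun_mat A nr nc"
  shows "polyfun_mat (\<lambda>s. c s \<cdot>\<^sub>m A s) nr nc"
  unfolding polyfun_mat_def
proof (intro conjI allI impI)
  fix s show "c s \<cdot>\<^sub>m A s \<in> carrier_mat nr nc" using A unfolding polyfun_mat_def by auto
next
  fix i j assume ij: "i < nr" "j < nc"
  have "(c s \<cdot>\<^sub>m A s) $$ (i, j) = c s * A s $$ (i, j)" for s
    using A ij unfolding polyfun_mat_def by (metis carrier_matD index_smult_mat(1))
  moreover have "polyfun (\<lambda>s. c s * A s $$ (i, j))"
    using c A ij unfolding polyfun_mat_def by (auto intro!: polyfun_mult)
  ultimately show "polyfun (\<lambda>s. (c s \<cdot>\<^sub>m A s) $$ (i, j))" by simp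
qed

lemma polyfun_mat_mult:
  assumes A: "polyfun_mat A nr k" and B: "polyfun_mat B k nc"
  shows "polyfun_mat (\<lambda>s. A s * B s) nr nc"
  unfolding polyfun_mat_def
proof (intro conjI allI impI)
  fix s show "A s * B s \<in> carrier_mat nr nc" using A B unfolding polyfun_mat_def by (meson mult_carrier_mat)
next
  fix i j assume ij: "i < nr" "j < nc"
  have c: "A s \<in> carrier_mat nr k" "B s \<in> carrier_mat k nc" for s using A B unfolding polyfun_mat_def by auto
  have "(A s * B s) $$ (i, j) = (\<Sum>l\<in>{0..<k}. A s $$ (i, l) * B s $$ (l, j))" for s
    using c[of s] ij by (simp add: scalar_prod_def)
  moreover have "polyfun (\<lambda>s. \<Sum>l\<in>{0..<k}. A s $$ (i, l) * B s $$ (l, j))"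
    using A B ij unfolding polyfun_mat_def by (auto intro!: polyfun_sum polyfun_mult)
  ultimately show "polyfun (\<lambda>s. (A s * B s) $$ (i, j))" by simp
qed

lemma polyfun_mat_pow:
  assumes A: "polyfun_mat A N N"
  shows "polyfun_mat (\<lambda>s. A s ^\<^sub>m k) N N"
proof (induction k)
  case 0
  have "A s ^\<^sub>m 0 = 1\<^sub>m N" for s using A unfolding polyfun_mat_def by auto
  then show ?case using polyfun_mat_const[OF one_carrier_mat] by simp
next
  case (Suc k)
  show ?case using polyfun_mat_mult[OF Suc.IH A] by simp
qed

lemma polyfun_det:
  assumes A: "polyfun_mat A N N"
  shows "polyfun (\<lambda>s. det (A s))"
proof -
  have "det (A s) = (\<Sum>p\<in>{p. p permutes {0..<N}}. signof p * (\<Prod>i=0..<N. A s $$ (i, p i)))" for s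
  proof -
    have "A s \<in> carrier_mat N N" using A unfolding polyfun_mat_def by auto
    then show ?thesis unfolding det_def by simp
  qed
  moreover have "polyfun (\<lambda>s. \<Sum>p\<in>{p. p permutes {0..<N}}. signof p * (\<Prod>i=0..<N. A s $$ (i, p i)))"
  proof (intro polyfun_sum ballI polyfun_mult polyfun_const polyfun_prod)
    fix p i assume "p \<in> {p. p permutes {0..<N}}" and i: "i \<in> {0..<N}"
    then have "p i < N" using permutes_in_image[of p "{0..<N}" i] by auto
    then show "polyfun (\<lambda>s. A s $$ (i, p i))" using A i unfolding polyfun_mat_def by auto
  qed
  ultimately show ?thesis by simp
qed

lemma polyfun_det_ctrb_mat:
  assumes Z: "polyfun_mat Z N N" and G: "G \<in> carrier_mat N n" and N: "N = k * n"
  shows "polyfun (\<lambda>s. det (ctrb_mat (Z s) G k))"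
proof (rule polyfun_det)
  have Zc: "Z s \<in> carrier_mat N N" for s using Z unfolding polyfun_mat_def by auto
  have blocks: "polyfun_mat (\<lambda>s. Z s ^\<^sub>m l * G) N n" for l
    by (rule polyfun_mat_mult[OF polyfun_mat_pow[OF Z] polyfun_mat_const[OF G]])
  show "polyfun_mat (\<lambda>s. ctrb_mat (Z s) G k) N N"
    unfolding polyfun_mat_def
  proof (intro conjI allI impI)
    show "ctrb_mat (Z s) G k \<in> carrier_mat N N" for s using ctrb_mat_carrier[OF Zc G] N by simp
    fix i j assume i: "i < N" and j: "j < N"
    then have "j < k * n" using N by simp
    then have "ctrb_mat (Z s) G k $$ (i, j) = (Z s ^\<^sub>m (j div n) * G) $$ (i, j mod n)" for s
      using index_ctrb_mat[OF Zc G i] by simp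
    moreover have "j mod n < n" using j N by (cases n) auto
    ultimately show "polyfun (\<lambda>s. ctrb_mat (Z s) G k $$ (i, j))"
      using blocks[of "j div n"] i unfolding polyfun_mat_def by simp
  qed
qed

lemma polyfun_mat_kron_laplacian:
  assumes W: "\<And>a j. polyfun (\<lambda>s. W s a j)"
  shows "polyfun_mat (\<lambda>s. kron (laplacian m nbr (W s)) (1\<^sub>m n)) (m * n) (m * n)"
  unfolding polyfun_mat_def
proof (intro conjI allI impI)
  show "kron (laplacian m nbr (W s)) (1\<^sub>m n) \<in> carrier_mat (m * n) (m * n)" for s
    using kron_one_carrier[OF laplacian_carrier] .
  fix r c assume r: "r < m * n" and c: "c < m * n"
  then have "r div n < m" "c div n < m" by (simp_all add: less_mult_imp_div_less)
  then have "kron (laplacian m nbr (W s)) (1\<^sub>m n) $$ (r, c) = (if r mod n = c mod n then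
      (if r div n = c div n then (\<Sum>j\<in>nbhd m nbr (r div n). W s (r div n) j) else 0)
      - (if c div n \<in> nbhd m nbr (r div n) then W s (r div n) (c div n) else 0) else 0)" for s
    using r c laplacian_carrier[of m nbr "W s"] by (subst index_kron_one) (auto simp: laplacian_def)
  moreover have "polyfun (\<lambda>s. if r mod n = c mod n then
      (if r div n = c div n then (\<Sum>j\<in>nbhd m nbr (r div n). W s (r div n) j) else 0)
      - (if c div n \<in> nbhd m nbr (r div n) then W s (r div n) (c div n) else 0) else 0)"
    by (cases "r mod n = c mod n"; cases "r div n = c div n"; cases "c div n \<in> nbhd m nbr (r div n)")
      (auto intro!: polyfun_diff polyfun_minus polyfun_sum W)
  ultimately show "polyfun (\<lambda>s. kron (laplacian m nbr (W s)) (1\<^sub>m n) $$ (r, c))" by simp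
qed

section \<open>Generic consensus weights\<close>

lemma exists_consensus_weights:
  assumes Y: "Y \<in> carrier_mat (n * m) (n * m)" and n: "n > 0" and sc: "strongly_connected m nbr"
  obtains W t where
    "\<And>q. q < m \<Longrightarrow> det (ctrb_mat (Y + t \<cdot>\<^sub>m kron (laplacian m nbr W) (1\<^sub>m n)) (unit_block n m q) m) \<noteq> 0"
proof -
  have "\<forall>x. \<exists>par depth :: nat \<Rightarrow> nat. x < m \<longrightarrow>
      (\<forall>a<m. a \<noteq> x \<longrightarrow> par a < m \<and> nbr a (par a) \<and> depth (par a) < depth a)"
    using strongly_connected_spanning_tree[OF sc] by metis
  then obtain par depth :: "nat \<Rightarrow> nat \<Rightarrow> nat" where tree: "\<And>x. x < m \<Longrightarrow>
      \<forall>a<m. a \<noteq> x \<longrightarrow> par x a < m \<and> nbr a (par x a) \<and> depth x (par x a) < depth x a"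
    by metis
  obtain Ws where Ws_poly: "\<And>a j. polyfun (\<lambda>s. Ws s a j)"
    and Ws_node: "\<And>x. x < m \<Longrightarrow> Ws (real x) = tree_weights x (par x)"
    using lagrange_interpolation[where w="\<lambda>x. tree_weights x (par x)" and m=m] by blast
  define u where "u s = (\<Prod>x<m. s - real x)" for s
  define Z where "Z s = u s \<cdot>\<^sub>m Y + kron (laplacian m nbr (Ws s)) (1\<^sub>m n)" for s
  have X: "kron (laplacian m nbr W) (1\<^sub>m n) \<in> carrier_mat (n * m) (n * m)" for W
    using kron_one_carrier[OF laplacian_carrier] by (simp add: mult.commute)
  have Z: "Z s \<in> carrier_mat (n * m) (n * m)" for s unfolding Z_def using Y X by simp
  have node: "det (ctrb_mat (Z (real x)) (unit_block n m x) m) \<noteq> 0" if x: "x < m" for x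
  proof -
    have "u (real x) = 0" unfolding u_def using x by (intro prod_zero) auto
    then have "Z (real x) = kron (laplacian m nbr (tree_weights x (par x))) (1\<^sub>m n)"
      unfolding Z_def Ws_node[OF x] by (intro eq_matI) (use Y X[of "tree_weights x (par x)"] in auto)
    then show ?thesis
      using det_ctrb_kron_laplacian_tree[where m=m and q=x and nbr=nbr and par="par x"
          and depth="depth x" and n=n, OF x tree[OF x]] by simp
  qed
  have "polyfun_mat Z (m * n) (m * n)"
    unfolding Z_def using Y
    by (intro polyfun_mat_add polyfun_mat_smult polyfun_mat_const polyfun_mat_kron_laplacian Ws_poly)
      (auto simp: u_def mult.commute intro!: polyfun_prod polyfun_diff)
  then have "polyfun (\<lambda>s. det (ctrb_mat (Z s) (unit_block n m q) m))" for q
    using polyfun_det_ctrb_mat[OF _ unit_block_carrier] by (simp add: mult.commute)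
  then obtain s where s: "s \<notin> real ` {..<m}" "\<And>q. q < m \<Longrightarrow> det (ctrb_mat (Z s) (unit_block n m q) m) \<noteq> 0"
    using polyfun_nonzero_avoiding[of "real ` {..<m}" m "\<lambda>q s. det (ctrb_mat (Z s) (unit_block n m q) m)"] node
    by blast
  have u: "u s \<noteq> 0" using s(1) unfolding u_def by auto
  have "Y + (1 / u s) \<cdot>\<^sub>m kron (laplacian m nbr (Ws s)) (1\<^sub>m n) = (1 / u s) \<cdot>\<^sub>m Z s"
    by (rule eq_matI) (use Y X[of "Ws s"] u in \<open>auto simp: Z_def field_simps\<close>)
  then show ?thesis
    using that[of "1 / u s" "Ws s"] u s(2) det_ctrb_mat_smult_nonzero[OF Z unit_block_carrier]
    by (simp add: mult.commute)
qed

theorem lemma5: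
  fixes n m :: nat and A :: "real mat"
    and B C F K :: "nat \<Rightarrow> real mat" and p q :: "nat \<Rightarrow> nat"
    and nbr :: "nat \<Rightarrow> nat \<Rightarrow> bool"
  assumes n_pos: "n \<ge> 1" and m_pos: "m \<ge> 1"
    and A_dim: "A \<in> carrier_mat n n"
    and B_dim: "\<forall>i<m. B i \<in> carrier_mat n (p i)"
    and C_dim: "\<forall>i<m. C i \<in> carrier_mat (q i) n"
    and F_dim: "\<forall>i<m. F i \<in> carrier_mat (p i) n"
    and K_dim: "\<forall>i<m. K i \<in> carrier_mat n (q i)"
    and jctrb: "controllable A (hcat n (map B [0..<m]))"
    and jobsv: "observable (vcat n (map C [0..<m])) A"
    and sc: "strongly_connected m nbr"
  shows
    "let Q = mat (n * m) (n * m) (\<lambda>(r, c). (B (c div n) * F (c div n)) $$ (r mod n, c mod n));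
         At = kron (1\<^sub>m m) (A + msum n n (\<lambda>j. B j * F j) {..<m}) - Q;
         Bt = (\<lambda>i. kron (unitv m i) (1\<^sub>m n));
         Ch = (\<lambda>i. C i * transpose_mat (Bt i));
         Cij = (\<lambda>i j. kron (transpose_mat (unitv m i) - transpose_mat (unitv m j)) (1\<^sub>m n));
         Ct = (\<lambda>i. vcat (n * m) (map (Cij i) (sorted_list_of_set (nbhd m nbr i))))
     in \<exists>H :: nat \<Rightarrow> real mat.
          (\<forall>i<m. H i \<in> carrier_mat n (n * card (nbhd m nbr i))) \<and>
          (\<forall>k<m. let Acl = At + msum (n * m) (n * m)
                               (\<lambda>i. Bt i * (K i * Ch i + H i * Ct i)) {..<m}
                  in controllable Acl (Bt k) \<and> controllability_index Acl (Bt k) = m)"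
proof -
  define At where "At = kron (1\<^sub>m m) (A + msum n n (\<lambda>j. B j * F j) {..<m})
    - mat (n * m) (n * m) (\<lambda>(r, c). (B (c div n) * F (c div n)) $$ (r mod n, c mod n))"
  define P where "P i = K i * (C i * transpose_mat (unit_block n m i))" for i
  define Y where "Y = At + msum (n * m) (n * m) (\<lambda>i. unit_block n m i * P i) {..<m}"
  have n: "n > 0" using n_pos by simp
  have Y: "Y \<in> carrier_mat (n * m) (n * m)" unfolding Y_def At_def msum_def by auto
  obtain W t where det:
    "\<And>q. q < m \<Longrightarrow> det (ctrb_mat (Y + t \<cdot>\<^sub>m kron (laplacian m nbr W) (1\<^sub>m n)) (unit_block n m q) m) \<noteq> 0"
    using exists_consensus_weights[OF Y n sc] by blast
  define H where "H i = t \<cdot>\<^sub>m consensus_gain n m nbr W i" for i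
  have P: "\<forall>i<m. P i \<in> carrier_mat n (n * m)"
    unfolding P_def using K_dim C_dim unit_block_carrier by (meson mult_carrier_mat transpose_carrier_mat)
  have closed_loop: "At + msum (n * m) (n * m)
      (\<lambda>i. unit_block n m i * (P i + H i * diff_output n m nbr i)) {..<m}
    = Y + t \<cdot>\<^sub>m kron (laplacian m nbr W) (1\<^sub>m n)"
    unfolding H_def msum_closed_loop[OF P] Y_def
    by (rule assoc_add_mat[symmetric]) (use kron_one_carrier[OF laplacian_carrier, of m nbr W n] in
        \<open>auto simp: At_def msum_def mult.commute\<close>)
  have "controllable (Y + t \<cdot>\<^sub>m kron (laplacian m nbr W) (1\<^sub>m n)) (unit_block n m q)
      \<and> controllability_index (Y + t \<cdot>\<^sub>m kron (laplacian m nbr W) (1\<^sub>m n)) (unit_block n m q) = m"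
    if "q < m" for q
    using controllable_if_det_ctrb_mat[OF _ unit_block_carrier _ n det[OF that]] Y
      kron_one_carrier[OF laplacian_carrier, of m nbr W n] by (simp add: mult.commute)
  moreover have "\<forall>i<m. H i \<in> carrier_mat n (n * card (nbhd m nbr i))"
    unfolding H_def using consensus_gain_carrier by simp
  ultimately show ?thesis
    unfolding Let_def by (intro exI[of _ H]) (use closed_loop in \<open>simp add: At_def P_def\<close>)
qed

end
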